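(* Suppose $F$ is a $\mu$-PL function for some $\mu>0$, let $\kappa=L/\mu$ and assume $\kappa>n^{1/3}$ and that $n^{2/3}$ is an integer. Let $b=n^{2/3}$, $\eta=1/(5L)$, $m=\lfloor n^{1/3}\rfloor$ and $T=\lceil 30\kappa\rceil$. Then for every integer $K\ge1$, both the output $x^K$ of PL-SVRG$(x^0,K,T,m,b,\eta)$ and the output $x^K$ of PL-SAGA$(x^0,K,T,b,\eta)$ satisfy $$\mathbb E\big[F(x^K)-F(x^* )\big]\le \frac{F(x^0)-F(x^* )}{2^K},$$ where $x^*$ is an optimal solution of $\min_x F(x)$.
   Context: Setting: Let $n,d\ge 1$ be integers and $[n]=\{1,\dots,n\}$. Let $f_1,\dots,f_n:\mathbb R^d\to\mathbb R$ be differentiable (possibly nonconvex) functions, each $L$-smooth for some $L>0$, i.e. $\|\nabla f_i(x)-\nabla f_i(y)\|\le L\|x-y\|$ for all $x,y\in\mathbb R^d$ and $i\in[n]$. Let $f=\frac1n\sum_{i=1}^n f_i$. Let $h:\mathbb R^d\to\mathbb R\cup\{+\infty\}$ be proper, lower semicontinuous and convex, with closed domain. Let $F=f+h$, and let $x^*$ be a global minimizer of $F$ on $\mathbb R^d$ (assumed to exist). For $\eta>0$, $\mathrm{prox}_{\eta h}(x):=\arg\min_{y\in\mathbb R^d}\big(h(y)+\frac1{2\eta}\|y-x\|^2\big)$. $\mu$-PL functions: for $x\in\mathbb R^d$ and $\alpha>0$ define $D_h(x,\alpha):=-2\alpha\min_{y\in\mathbb R^d}\big[\langle\nabla f(x),y-x\rangle+\frac{\alpha}{2}\|y-x\|^2+h(y)-h(x)\big]$.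 $F$ is called $\mu$-PL ($\mu>0$) if $\mu\,(F(x)-F(x^* ))\le \frac12 D_h(x,\mu)$ for all $x\in\mathrm{dom}(h)$. Algorithm ProxSVRG$(x^0,T,m,b,\eta)$: Given $x^0\in\mathbb R^d$, positive integers $T,m,b$ and $\eta>0$, let $S=\lceil T/m\rceil$ and set $\tilde x^0=x^0_m=x^0$. For $s=0,\dots,S-1$: set $x^{s+1}_0=x^s_m$ and $g^{s+1}=\frac1n\sum_{i=1}^n\nabla f_i(\tilde x^s)$; for $t=0,\dots,m-1$: draw a multiset $I_t$ of $b$ indices, each drawn independently and uniformly at random from $[n]$ (with replacement, independently of all previous draws), set $v^{s+1}_t=\frac1b\sum_{i\in I_t}\big(\nabla f_i(x^{s+1}_t)-\nabla f_i(\tilde x^s)\big)+g^{s+1}$ and $x^{s+1}_{t+1}=\mathrm{prox}_{\eta h}(x^{s+1}_t-\eta v^{s+1}_t)$; after the inner loop set $\tilde x^{s+1}=x^{s+1}_m$. The output $x_a$ is chosen uniformly at random from $\{x^{s+1}_t: 0\le t\le m-1,\ 0\le s\le S-1\}$. Algorithm ProxSAGA$(x^0,T,b,\eta)$: Given $x^0\in\mathbb R^d$, positive integers $T,b$ and $\eta>0$, set $\alpha^0_i=x^0$ for all $i\in[n]$. For $t=0,1,\dots$ let $g^t=\frac1n\sum_{i=1}^n\nabla f_i(\alpha^t_i)$. For $t=0,\dots,T-1$: draw two multisets $I_t,J_t$, each consisting of $b$ indices drawn independently and uniformly at random from $[n]$ (with replacement; $I_t$, $J_t$ independent of each other and of all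 previous draws); set $v^t=\frac1b\sum_{i\in I_t}\big(\nabla f_i(x^t)-\nabla f_i(\alpha^t_i)\big)+g^t$ and $x^{t+1}=\mathrm{prox}_{\eta h}(x^t-\eta v^t)$; set $\alpha^{t+1}_j=x^t$ for $j\in J_t$ and $\alpha^{t+1}_j=\alpha^t_j$ for $j\notin J_t$. The output $x_a$ is chosen uniformly at random from $\{x^0,\dots,x^{T-1}\}$. Algorithm PL-SVRG$(x^0,K,T,m,b,\eta)$: for $k=1,\dots,K$, let $x^k$ be the output $x_a$ of ProxSVRG$(x^{k-1},T,m,b,\eta)$ (run with fresh independent randomness); output $x^K$. Algorithm PL-SAGA$(x^0,K,T,b,\eta)$: for $k=1,\dots,K$, let $x^k$ be the output $x_a$ of ProxSAGA$(x^{k-1},T,b,\eta)$ (run with fresh independent randomness); output $x^K$. Expectations are over all randomness. *)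

theory Defs
  imports "HOL-Analysis.Analysis" "HOL-Probability.Probability"
begin

definition edom :: "('a \<Rightarrow> ereal) \<Rightarrow> 'a set" where
  "edom h = {x. h x < \<infinity>}"

definition proper_fun :: "('a \<Rightarrow> ereal) \<Rightarrow> bool" where
  "proper_fun h \<longleftrightarrow> (\<exists>x. h x < \<infinity>) \<and> (\<forall>x. h x \<noteq> -\<infinity>)"

definition lsc_fun :: "('a::topological_space \<Rightarrow> ereal) \<Rightarrow> bool" where
  "lsc_fun h \<longleftrightarrow> (\<forall>x. h x \<le> Liminf (at x) h)"

definition convex_efun :: "('a::real_vector \<Rightarrow> ereal) \<Rightarrow> bool" where
  "convex_efun h \<longleftrightarrow> convex (edom h) \<and> convex_on (edom h) (\<lambda>x. real_of_ereal (h x))"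

definition prox :: "real \<Rightarrow> ('a::real_normed_vector \<Rightarrow> ereal) \<Rightarrow> 'a \<Rightarrow> 'a" where
  "prox \<eta> h x = (SOME y. \<forall>z. h y + ereal ((norm (y - x))\<^sup>2 / (2 * \<eta>))
                             \<le> h z + ereal ((norm (z - x))\<^sup>2 / (2 * \<eta>)))"

definition favg :: "nat \<Rightarrow> (nat \<Rightarrow> 'a \<Rightarrow> real) \<Rightarrow> 'a \<Rightarrow> real" where
  "favg n fs x = (\<Sum>i=1..n. fs i x) / real n"

definition gavg :: "nat \<Rightarrow> (nat \<Rightarrow> 'a \<Rightarrow> 'a::real_vector) \<Rightarrow> 'a \<Rightarrow> 'a" where
  "gavg n gs x = (1 / real n) *\<^sub>R (\<Sum>i=1..n. gs i x)"

definition Fobj :: "nat \<Rightarrow> (nat \<Rightarrow> 'a \<Rightarrow> real) \<Rightarrow> ('a \<Rightarrow> ereal) \<Rightarrow> 'a \<Rightarrow> ereal" where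
  "Fobj n fs h x = ereal (favg n fs x) + h x"

definition Dh :: "('a \<Rightarrow> 'a::real_inner) \<Rightarrow> ('a \<Rightarrow> ereal) \<Rightarrow> 'a \<Rightarrow> real \<Rightarrow> ereal" where
  "Dh gradf h x \<alpha> = ereal (-2 * \<alpha>) *
     (INF y. ereal (gradf x \<bullet> (y - x) + \<alpha> / 2 * (norm (y - x))\<^sup>2) + h y - h x)"

definition is_PL :: "real \<Rightarrow> ('a \<Rightarrow> ereal) \<Rightarrow> ('a \<Rightarrow> 'a::real_inner) \<Rightarrow> ('a \<Rightarrow> ereal) \<Rightarrow> 'a \<Rightarrow> bool" where
  "is_PL \<mu> F gradf h xstar \<longleftrightarrow> \<mu> > 0 \<and>
     (\<forall>x\<in>edom h. ereal \<mu> * (F x - F xstar) \<le> ereal (1/2) * Dh gradf h x \<mu>)"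

text \<open>b indices drawn independently, uniformly from {1..n}, with replacement
  (the multiset I_t, represented by a list)\<close>
fun draw_idx :: "nat \<Rightarrow> nat \<Rightarrow> nat list pmf" where
  "draw_idx n 0 = return_pmf []"
| "draw_idx n (Suc b) = do { i \<leftarrow> pmf_of_set {1..n}; is \<leftarrow> draw_idx n b; return_pmf (i # is) }"

definition unif_list :: "'a list \<Rightarrow> 'a pmf" where
  "unif_list xs = map_pmf (\<lambda>i. xs ! i) (pmf_of_set {..<length xs})"

definition svrg_v :: "(nat \<Rightarrow> 'a \<Rightarrow> 'a::real_vector) \<Rightarrow> nat \<Rightarrow> nat list \<Rightarrow> 'a \<Rightarrow> 'a \<Rightarrow> 'a \<Rightarrow> 'a" where
  "svrg_v gs b I x xt g = (1 / real b) *\<^sub>R (\<Sum>i\<leftarrow>I. gs i x - gs i xt) + g"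

text \<open>inner loop: from x_0 performs k steps; returns ([x_0,...,x_{k-1}], x_k)\<close>
fun svrg_inner :: "nat \<Rightarrow> (nat \<Rightarrow> 'a \<Rightarrow> 'a::real_normed_vector) \<Rightarrow> ('a \<Rightarrow> ereal) \<Rightarrow> nat \<Rightarrow> real
    \<Rightarrow> 'a \<Rightarrow> 'a \<Rightarrow> nat \<Rightarrow> 'a \<Rightarrow> ('a list \<times> 'a) pmf" where
  "svrg_inner n gs h b \<eta> xt g 0 x = return_pmf ([], x)"
| "svrg_inner n gs h b \<eta> xt g (Suc k) x = do {
     I \<leftarrow> draw_idx n b;
     let x' = prox \<eta> h (x - \<eta> *\<^sub>R svrg_v gs b I x xt g);
     (l, xf) \<leftarrow> svrg_inner n gs h b \<eta> xt g k x';
     return_pmf (x # l, xf) }"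

text \<open>outer loop: s epochs starting from the snapshot x~; returns list of all inner iterates
  x^{s+1}_t (0 <= t <= m-1) in order\<close>
fun svrg_epochs :: "nat \<Rightarrow> (nat \<Rightarrow> 'a \<Rightarrow> 'a::real_normed_vector) \<Rightarrow> ('a \<Rightarrow> ereal) \<Rightarrow> nat \<Rightarrow> nat \<Rightarrow> real
    \<Rightarrow> nat \<Rightarrow> 'a \<Rightarrow> 'a list pmf" where
  "svrg_epochs n gs h m b \<eta> 0 xt = return_pmf []"
| "svrg_epochs n gs h m b \<eta> (Suc s) xt = do {
     (l, xm) \<leftarrow> svrg_inner n gs h b \<eta> xt (gavg n gs xt) m xt;
     rest \<leftarrow> svrg_epochs n gs h m b \<eta> s xm;
     return_pmf (l @ rest) }"

definition ProxSVRG :: "nat \<Rightarrow> (nat \<Rightarrow> 'a \<Rightarrow> 'a::real_normed_vector) \<Rightarrow> ('a \<Rightarrow> ereal)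
    \<Rightarrow> 'a \<Rightarrow> nat \<Rightarrow> nat \<Rightarrow> nat \<Rightarrow> real \<Rightarrow> 'a pmf" where
  "ProxSVRG n gs h x0 T m b \<eta> =
     svrg_epochs n gs h m b \<eta> (nat \<lceil>real T / real m\<rceil>) x0 \<bind> unif_list"

text \<open>k iterations from state (x, alpha); returns the list [x^t, ..., x^{t+k-1}]\<close>
fun saga_iter :: "nat \<Rightarrow> (nat \<Rightarrow> 'a \<Rightarrow> 'a::real_normed_vector) \<Rightarrow> ('a \<Rightarrow> ereal) \<Rightarrow> nat \<Rightarrow> real
    \<Rightarrow> nat \<Rightarrow> 'a \<Rightarrow> (nat \<Rightarrow> 'a) \<Rightarrow> 'a list pmf" where
  "saga_iter n gs h b \<eta> 0 x \<alpha> = return_pmf []"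
| "saga_iter n gs h b \<eta> (Suc k) x \<alpha> = do {
     I \<leftarrow> draw_idx n b;
     J \<leftarrow> draw_idx n b;
     let g = (1 / real n) *\<^sub>R (\<Sum>i=1..n. gs i (\<alpha> i));
     let v = (1 / real b) *\<^sub>R (\<Sum>i\<leftarrow>I. gs i x - gs i (\<alpha> i)) + g;
     let x' = prox \<eta> h (x - \<eta> *\<^sub>R v);
     let \<alpha>' = (\<lambda>j. if j \<in> set J then x else \<alpha> j);
     rest \<leftarrow> saga_iter n gs h b \<eta> k x' \<alpha>';
     return_pmf (x # rest) }"

definition ProxSAGA :: "nat \<Rightarrow> (nat \<Rightarrow> 'a \<Rightarrow> 'a::real_normed_vector) \<Rightarrow> ('a \<Rightarrow> ereal)
    \<Rightarrow> 'a \<Rightarrow> nat \<Rightarrow> nat \<Rightarrow> real \<Rightarrow> 'a pmf" where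
  "ProxSAGA n gs h x0 T b \<eta> = saga_iter n gs h b \<eta> T x0 (\<lambda>_. x0) \<bind> unif_list"

fun PL_SVRG :: "nat \<Rightarrow> (nat \<Rightarrow> 'a \<Rightarrow> 'a::real_normed_vector) \<Rightarrow> ('a \<Rightarrow> ereal)
    \<Rightarrow> 'a \<Rightarrow> nat \<Rightarrow> nat \<Rightarrow> nat \<Rightarrow> nat \<Rightarrow> real \<Rightarrow> 'a pmf" where
  "PL_SVRG n gs h x0 0 T m b \<eta> = return_pmf x0"
| "PL_SVRG n gs h x0 (Suc k) T m b \<eta> =
     PL_SVRG n gs h x0 k T m b \<eta> \<bind> (\<lambda>y. ProxSVRG n gs h y T m b \<eta>)"

fun PL_SAGA :: "nat \<Rightarrow> (nat \<Rightarrow> 'a \<Rightarrow> 'a::real_normed_vector) \<Rightarrow> ('a \<Rightarrow> ereal)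
    \<Rightarrow> 'a \<Rightarrow> nat \<Rightarrow> nat \<Rightarrow> nat \<Rightarrow> real \<Rightarrow> 'a pmf" where
  "PL_SAGA n gs h x0 0 T b \<eta> = return_pmf x0"
| "PL_SAGA n gs h x0 (Suc k) T b \<eta> =
     PL_SAGA n gs h x0 k T b \<eta> \<bind> (\<lambda>y. ProxSAGA n gs h y T b \<eta>)"

end

theory Submission
  imports Defs
begin

(*
  With eta = 1/(5L), comparing the proximal step x+ = prox (x - eta v) with the point
  x + eta mu (u - x) and applying the PL inequality gives, for the gap Delta = F - F(xstar),
    Delta(x+) + 2L |x+ - x|^2 + eta mu Delta(x) <= Delta(x) + eta/2 |grad f(x) - v|^2.
  For the SVRG and SAGA estimators the variance term is at most L^2/b times the mean squared
  distance from x to the anchor points (the snapshot, resp. the alpha_i).  Adding a multiple of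
  that distance to Delta yields a Lyapunov function whose increase is paid for by the movement
  term 2L |x+ - x|^2.  Telescoping, eta mu E[sum_t Delta(x^t)] <= Delta(x^0), so the uniformly
  chosen output has expected gap at most Delta(x^0) / (T eta mu) <= Delta(x^0)/2 since T >= 30 kappa;
  every restart halves the gap once more.
*)

section \<open>Sampling indices with replacement\<close>

lemma set_pmf_draw_idx: "n \<ge> 1 \<Longrightarrow> set_pmf (draw_idx n b) \<subseteq> {l. length l = b \<and> set l \<subseteq> {1..n}}"
  by (induction b) (force simp: set_pmf_of_set subset_iff)+

lemma finite_set_pmf_draw_idx: assumes "n \<ge> 1" shows "finite (set_pmf (draw_idx n b))"
proof -
  have "finite {l. set l \<subseteq> {1..n} \<and> length l = b}"
    by (rule finite_lists_length_eq) simp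
  then show ?thesis
    by (rule finite_subset[rotated]) (use set_pmf_draw_idx[OF \<open>n \<ge> 1\<close>] in auto)
qed

lemma integrable_draw_idx:
  fixes f :: "nat list \<Rightarrow> 'c::{banach, second_countable_topology}"
  assumes "n \<ge> 1"
  shows "integrable (measure_pmf (draw_idx n b)) f"
  by (rule integrable_measure_pmf_finite[OF finite_set_pmf_draw_idx[OF assms]])

lemma expectation_draw_idx_Suc:
  fixes H :: "nat list \<Rightarrow> 'c::{banach, second_countable_topology}"
  assumes "n \<ge> 1"
  shows "measure_pmf.expectation (draw_idx n (Suc b)) H =
     (\<Sum>i\<in>{1..n}. measure_pmf.expectation (draw_idx n b) (\<lambda>is. H (i # is))) /\<^sub>R real n"
proof -
  have eq: "draw_idx n (Suc b) = pmf_of_set {1..n} \<bind> (\<lambda>i. map_pmf (\<lambda>is. i # is) (draw_idx n b))"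
    by (simp add: map_pmf_def)
  show ?thesis unfolding eq
    using assms
    by (subst pmf_expectation_bind_pmf_of_set) (auto simp: finite_set_pmf_draw_idx scaleR_sum_right)
qed

lemma expectation_draw_idx_norm_sum_sq:
  fixes w :: "nat \<Rightarrow> 'a::euclidean_space"
  assumes n: "n \<ge> 1" and w0: "(\<Sum>i=1..n. w i) = 0"
  shows "measure_pmf.expectation (draw_idx n b) (\<lambda>I. (norm (\<Sum>i\<leftarrow>I. w i))\<^sup>2)
       = real b * ((\<Sum>i=1..n. (norm (w i))\<^sup>2) / real n)"
proof (induction b)
  case 0
  then show ?case by simp
next
  case (Suc b)
  let ?E = "measure_pmf.expectation (draw_idx n b)"
  let ?S = "\<lambda>is. (\<Sum>i\<leftarrow>is. w i)"
  have int: "\<And>f :: nat list \<Rightarrow> real. integrable (measure_pmf (draw_idx n b)) f"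
    by (rule integrable_draw_idx[OF n])
  have step: "?E (\<lambda>is. (norm (w i + ?S is))\<^sup>2) = (norm (w i))\<^sup>2 + 2 * ?E (\<lambda>is. w i \<bullet> ?S is) + ?E (\<lambda>is. (norm (?S is))\<^sup>2)" for i
  proof -
    have "(\<lambda>is. (norm (w i + ?S is))\<^sup>2) = (\<lambda>is. (norm (w i))\<^sup>2 + (2 * (w i \<bullet> ?S is) + (norm (?S is))\<^sup>2))"
      by (auto simp: power2_norm_eq_inner inner_add algebra_simps inner_commute)
    then show ?thesis using int by (simp add: integral_add)
  qed
  have cross: "(\<Sum>i=1..n. ?E (\<lambda>is. w i \<bullet> ?S is)) = 0"
  proof -
    have "(\<Sum>i=1..n. ?E (\<lambda>is. w i \<bullet> ?S is)) = ?E (\<lambda>is. \<Sum>i=1..n. w i \<bullet> ?S is)"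
      using int by (simp add: integral_sum)
    also have "(\<lambda>is. \<Sum>i=1..n. w i \<bullet> ?S is) = (\<lambda>is. 0)"
      using w0 by (simp add: inner_sum_left[symmetric])
    finally show ?thesis by simp
  qed
  have "measure_pmf.expectation (draw_idx n (Suc b)) (\<lambda>I. (norm (?S I))\<^sup>2)
      = (\<Sum>i=1..n. ?E (\<lambda>is. (norm (w i + ?S is))\<^sup>2)) / real n"
    by (subst expectation_draw_idx_Suc[OF n]) (simp add: divide_inverse mult.commute)
  also have "\<dots> = ((\<Sum>i=1..n. (norm (w i))\<^sup>2) + 2 * (\<Sum>i=1..n. ?E (\<lambda>is. w i \<bullet> ?S is))
        + real n * ?E (\<lambda>is. (norm (?S is))\<^sup>2)) / real n"
    by (simp add: step sum.distrib sum_distrib_left)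
  also have "\<dots> = real (Suc b) * ((\<Sum>i=1..n. (norm (w i))\<^sup>2) / real n)"
    unfolding cross Suc using n by (simp add: field_simps)
  finally show ?case .
qed

lemma expectation_draw_idx_member:
  assumes n: "n \<ge> 1" and j: "j \<in> {1..n}"
  shows "measure_pmf.expectation (draw_idx n b) (\<lambda>J. if j \<in> set J then a else c)
       = a + (c - a) * (1 - 1 / real n) ^ b"
proof (induction b)
  case 0
  then show ?case by simp
next
  case (Suc b)
  let ?E = "measure_pmf.expectation (draw_idx n b)"
  have "measure_pmf.expectation (draw_idx n (Suc b)) (\<lambda>J. if j \<in> set J then a else c)
     = (\<Sum>i=1..n. ?E (\<lambda>is. if j \<in> set (i # is) then a else c)) / real n"
    by (subst expectation_draw_idx_Suc[OF n]) (simp add: divide_inverse mult.commute)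
  also have "(\<lambda>i. ?E (\<lambda>is. if j \<in> set (i # is) then a else c))
      = (\<lambda>i. (a + (c - a) * (1 - 1 / real n) ^ b) + (if i = j then (c - a) * - ((1 - 1 / real n) ^ b) else 0))"
    by (auto simp: Suc)
  also have "(\<Sum>i=1..n. (a + (c - a) * (1 - 1 / real n) ^ b) + (if i = j then (c - a) * - ((1 - 1 / real n) ^ b) else 0))
     = real n * (a + (c - a) * (1 - 1 / real n) ^ b) + (c - a) * - ((1 - 1 / real n) ^ b)"
    using j by (simp add: sum.distrib)
  also have "\<dots> / real n = a + (c - a) * (1 - 1 / real n) ^ Suc b"
    using n by (simp add: field_simps)
  finally show ?case .
qed

lemma sum_list_map_diff_const:
  fixes u :: "nat \<Rightarrow> 'a::real_vector"
  shows "(\<Sum>i\<leftarrow>I. u i - c) = (\<Sum>i\<leftarrow>I. u i) - real (length I) *\<^sub>R c"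
  by (induction I) (auto simp: algebra_simps)

lemma expectation_minibatch_deviation_le:
  fixes u :: "nat \<Rightarrow> 'a::euclidean_space"
  assumes n: "n \<ge> 1" and b: "b \<ge> 1"
  shows "measure_pmf.expectation (draw_idx n b)
           (\<lambda>I. (norm ((1 / real b) *\<^sub>R (\<Sum>i\<leftarrow>I. u i) - (1 / real n) *\<^sub>R (\<Sum>i=1..n. u i)))\<^sup>2)
         \<le> (\<Sum>i=1..n. (norm (u i))\<^sup>2) / (real b * real n)"
proof -
  define ub where "ub = (1 / real n) *\<^sub>R (\<Sum>i=1..n. u i)"
  define w where "w = (\<lambda>i. u i - ub)"
  have sumu: "(\<Sum>i=1..n. u i) = real n *\<^sub>R ub" unfolding ub_def using n by simp
  have w0: "(\<Sum>i=1..n. w i) = 0" unfolding w_def using sumu by (simp add: sum_subtractf sum_constant_scaleR)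
  have cong: "(norm ((1 / real b) *\<^sub>R (\<Sum>i\<leftarrow>I. u i) - ub))\<^sup>2 = (1 / real b)\<^sup>2 * (norm (\<Sum>i\<leftarrow>I. w i))\<^sup>2"
    if "I \<in> set_pmf (draw_idx n b)" for I
  proof -
    have len: "length I = b" using set_pmf_draw_idx[OF n] that by auto
    have "(1 / real b) *\<^sub>R (\<Sum>i\<leftarrow>I. u i) - ub = (1 / real b) *\<^sub>R (\<Sum>i\<leftarrow>I. w i)"
      unfolding w_def sum_list_map_diff_const len using b by (simp add: algebra_simps)
    then show ?thesis by (simp add: power_divide)
  qed
  have "measure_pmf.expectation (draw_idx n b) (\<lambda>I. (norm ((1 / real b) *\<^sub>R (\<Sum>i\<leftarrow>I. u i) - ub))\<^sup>2)
      = measure_pmf.expectation (draw_idx n b) (\<lambda>I. (1 / real b)\<^sup>2 * (norm (\<Sum>i\<leftarrow>I. w i))\<^sup>2)"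
    by (rule integral_cong_AE) (auto simp: AE_measure_pmf_iff cong)
  also have "\<dots> = (1 / real b)\<^sup>2 * (real b * ((\<Sum>i=1..n. (norm (w i))\<^sup>2) / real n))"
    using expectation_draw_idx_norm_sum_sq[OF n w0, of b] by simp
  also have "\<dots> = (\<Sum>i=1..n. (norm (w i))\<^sup>2) / (real b * real n)"
    using b by (simp add: power2_eq_square field_simps)
  also have "\<dots> \<le> (\<Sum>i=1..n. (norm (u i))\<^sup>2) / (real b * real n)"
  proof -
    have "(\<Sum>i=1..n. (norm (w i))\<^sup>2) = (\<Sum>i=1..n. (norm (u i))\<^sup>2 - 2 * (u i \<bullet> ub) + (norm ub)\<^sup>2)"
      unfolding w_def by (intro sum.cong refl) (simp add: power2_norm_eq_inner inner_diff_left inner_diff_right inner_commute)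
    also have "\<dots> = (\<Sum>i=1..n. (norm (u i))\<^sup>2) - 2 * ((\<Sum>i=1..n. u i) \<bullet> ub) + real n * (norm ub)\<^sup>2"
      by (simp add: sum.distrib sum_subtractf inner_sum_left sum_distrib_left)
    also have "\<dots> = (\<Sum>i=1..n. (norm (u i))\<^sup>2) - real n * (norm ub)\<^sup>2"
      unfolding sumu by (simp add: power2_norm_eq_inner)
    finally have "(\<Sum>i=1..n. (norm (w i))\<^sup>2) \<le> (\<Sum>i=1..n. (norm (u i))\<^sup>2)" by simp
    then show ?thesis using n b by (simp add: divide_right_mono)
  qed
  finally show ?thesis unfolding ub_def .
qed

lemma power2_norm_add:
  fixes a b :: "'a::real_inner"
  shows "(norm (a + b))\<^sup>2 = (norm a)\<^sup>2 + 2 * (a \<bullet> b) + (norm b)\<^sup>2"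
  by (simp add: power2_norm_eq_inner inner_add_left inner_add_right inner_commute)

lemma power2_norm_diff:
  fixes a b :: "'a::real_inner"
  shows "(norm (a - b))\<^sup>2 = (norm a)\<^sup>2 - 2 * (a \<bullet> b) + (norm b)\<^sup>2"
  using power2_norm_add[of a "- b"] by simp

lemma Young_inner_nonneg:
  fixes p q :: "'a::real_inner"
  assumes "\<beta> > 0"
  shows "0 \<le> (norm p)\<^sup>2 / (2 * \<beta>) + p \<bullet> q + \<beta> / 2 * (norm q)\<^sup>2"
proof -
  have "0 \<le> (norm (p + \<beta> *\<^sub>R q))\<^sup>2 / (2 * \<beta>)" using assms by simp
  also have "\<dots> = (norm p)\<^sup>2 / (2 * \<beta>) + p \<bullet> q + \<beta> / 2 * (norm q)\<^sup>2"
    unfolding power2_norm_add using assms by (simp add: power_mult_distrib field_simps power2_eq_square)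
  finally show ?thesis .
qed

lemma power2_norm_add_le_Young:
  fixes a c :: "'a::real_inner"
  assumes "\<theta> > 0"
  shows "(norm (a + c))\<^sup>2 \<le> (1 + \<theta>) * (norm a)\<^sup>2 + (1 + 1 / \<theta>) * (norm c)\<^sup>2"
proof -
  have "0 \<le> (norm (\<theta> *\<^sub>R a - c))\<^sup>2 / \<theta>" using assms by simp
  also have "\<dots> = \<theta> * (norm a)\<^sup>2 - 2 * (a \<bullet> c) + (norm c)\<^sup>2 / \<theta>"
    using assms unfolding power2_norm_diff by (simp add: power_mult_distrib field_simps power2_eq_square)
  finally have "2 * (a \<bullet> c) \<le> \<theta> * (norm a)\<^sup>2 + (norm c)\<^sup>2 / \<theta>" by simp
  then show ?thesis unfolding power2_norm_add by (simp add: algebra_simps)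
qed

lemma power2_norm_add_le_scaled:
  fixes a c :: "'a::real_inner"
  assumes a: "(norm a)\<^sup>2 \<le> t * A" and "0 \<le> A" "0 \<le> t"
  shows "(norm (a + c))\<^sup>2 \<le> (t + 1) * (A + (norm c)\<^sup>2)"
proof (cases "t = 0")
  case True
  then show ?thesis using assms by simp
next
  case False
  then have t: "t > 0" using assms by simp
  have "(1 + 1 / t) * (norm a)\<^sup>2 \<le> (1 + 1 / t) * (t * A)"
    using a t by (intro mult_left_mono) auto
  also have "\<dots> = (t + 1) * A" using t by (simp add: field_simps)
  finally show ?thesis
    using power2_norm_add_le_Young[of "1 / t" a c] t by (simp add: algebra_simps)
qed

lemma smooth_upper_bound:
  fixes f :: "'a::real_inner \<Rightarrow> real" and G :: "'a \<Rightarrow> 'a"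
  assumes der: "\<And>x. (f has_derivative (\<lambda>v. G x \<bullet> v)) (at x)"
    and lip: "\<And>x y. norm (G x - G y) \<le> L * norm (x - y)"
  shows "f y \<le> f x + G x \<bullet> (y - x) + L / 2 * (norm (y - x))\<^sup>2"
proof -
  define d where "d = y - x"
  define \<psi> where "\<psi> = (\<lambda>t. f (x + t *\<^sub>R d) - t * (G x \<bullet> d) - L / 2 * t\<^sup>2 * (norm d)\<^sup>2)"
  have "\<psi> 1 \<le> \<psi> 0"
  proof (rule DERIV_nonpos_imp_nonincreasing[of 0 1])
    fix t :: real assume t: "0 \<le> t" "t \<le> 1"
    let ?D = "G (x + t *\<^sub>R d) \<bullet> d - G x \<bullet> d - L * t * (norm d)\<^sup>2"
    have line: "((\<lambda>t. x + t *\<^sub>R d) has_derivative (\<lambda>s. s *\<^sub>R d)) (at t)"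
      by (auto intro!: derivative_eq_intros)
    have c1: "((\<lambda>t. f (x + t *\<^sub>R d)) has_derivative (\<lambda>s. G (x + t *\<^sub>R d) \<bullet> (s *\<^sub>R d))) (at t)"
      by (rule has_derivative_compose[OF line der])
    have "(\<psi> has_derivative (\<lambda>s. G (x + t *\<^sub>R d) \<bullet> (s *\<^sub>R d) - s * (G x \<bullet> d) - L / 2 * (2 * t * s) * (norm d)\<^sup>2)) (at t)"
      unfolding \<psi>_def
      by (rule c1 derivative_eq_intros refl | simp add: fun_eq_iff mult.commute)+
    then have "(\<psi> has_real_derivative ?D) (at t)"
      unfolding has_field_derivative_def
      by (rule has_derivative_eq_rhs) (auto simp: algebra_simps fun_eq_iff)
    moreover have "?D \<le> 0"
    proof -
      have "G (x + t *\<^sub>R d) \<bullet> d - G x \<bullet> d = (G (x + t *\<^sub>R d) - G x) \<bullet> d" by (simp add: inner_diff_left)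
      also have "\<dots> \<le> norm (G (x + t *\<^sub>R d) - G x) * norm d" by (rule norm_cauchy_schwarz)
      also have "\<dots> \<le> (L * norm (t *\<^sub>R d)) * norm d" using lip[of "x + t *\<^sub>R d" x] by (simp add: mult_right_mono)
      also have "\<dots> = L * t * (norm d)\<^sup>2" using t by (simp add: power2_eq_square)
      finally show ?thesis by simp
    qed
    ultimately show "\<exists>y. (\<psi> has_real_derivative y) (at t) \<and> y \<le> 0" by blast
  qed simp
  then show ?thesis unfolding \<psi>_def d_def by simp
qed

section \<open>The proximal map\<close>

lemma lsc_fun_open_superlevel:
  fixes g :: "'a::topological_space \<Rightarrow> ereal"
  assumes "lsc_fun g"
  shows "open {y. c < g y}"
proof (subst open_subopen, intro ballI)
  fix y assume "y \<in> {y. c < g y}"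
  then have "c < Liminf (at y) g" using assms unfolding lsc_fun_def by (auto intro: less_le_trans)
  then have "eventually (\<lambda>u. c < g u) (at y)" by (rule less_LiminfD)
  then obtain S where S: "open S" "y \<in> S" "\<forall>u\<in>S. u \<noteq> y \<longrightarrow> c < g u"
    unfolding eventually_at_topological by blast
  with \<open>y \<in> {y. c < g y}\<close> show "\<exists>T. open T \<and> y \<in> T \<and> T \<subseteq> {y. c < g y}"
    by (intro exI[of _ S]) auto
qed

lemma open_superlevel_add_continuous:
  fixes g :: "'a::metric_space \<Rightarrow> ereal"
  assumes op: "\<And>c. open {y. c < g y}" and ninf: "\<And>y. g y \<noteq> -\<infinity>" and q: "continuous_on UNIV q"
  shows "open {y. c < g y + ereal (q y)}"
proof (subst open_subopen, intro ballI)
  fix y0 assume "y0 \<in> {y. c < g y + ereal (q y)}"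
  then have c: "c < g y0 + ereal (q y0)" by simp
  show "\<exists>T. open T \<and> y0 \<in> T \<and> T \<subseteq> {y. c < g y + ereal (q y)}"
  proof (cases c)
    case MInf
    have "\<And>y. g y + ereal (q y) \<noteq> -\<infinity>" using ninf by simp
    then show ?thesis using MInf by (intro exI[of _ UNIV]) auto
  next
    case PInf
    then show ?thesis using c by simp
  next
    case (real c')
    have "ereal (c' - q y0) < g y0"
      using c real ninf by (cases "g y0") auto
    then obtain a where a1: "ereal (c' - q y0) < a" and a2: "a < g y0" using dense by blast
    then obtain a' where a': "a = ereal a'" by (cases a) auto
    define e where "e = a' - (c' - q y0)"
    have e: "e > 0" using a1 a' e_def by simp
    let ?T = "{y. a < g y} \<inter> {y. dist (q y) (q y0) < e}"
    have "open {y. dist (q y) (q y0) < e}"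
      using open_vimage[OF open_ball[of "q y0" e] q] by (simp add: dist_commute ball_def vimage_def)
    then have "open ?T" using op by auto
    moreover have "y0 \<in> ?T" using a2 e by simp
    moreover have "?T \<subseteq> {y. c < g y + ereal (q y)}"
    proof
      fix y assume y: "y \<in> ?T"
      then have "a < g y" "\<bar>q y - q y0\<bar> < e" by (auto simp: dist_real_def)
      then show "y \<in> {y. c < g y + ereal (q y)}"
        using a' real e_def ninf[of y] by (cases "g y") auto
    qed
    ultimately show ?thesis by blast
  qed
qed

lemma open_superlevel_attains_min:
  fixes g :: "'a::topological_space \<Rightarrow> ereal"
  assumes op: "\<And>c. open {y. c < g y}" and K: "compact K" "K \<noteq> {}"
  shows "\<exists>y\<in>K. \<forall>u\<in>K. g y \<le> g u"
proof (rule ccontr)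
  assume "\<not> ?thesis"
  then have less: "\<forall>y\<in>K. \<exists>u\<in>K. g u < g y" by (auto simp: not_le)
  define m where "m = (INF u\<in>K. g u)"
  have "\<forall>y\<in>K. m < g y"
    using less unfolding m_def by (meson INF_lower le_less_trans)
  then have "K \<subseteq> (\<Union>c\<in>{c. m < c}. {y. c < g y})"
    using dense by fastforce
  then obtain C' where C': "C' \<subseteq> {c. m < c}" "finite C'" "K \<subseteq> (\<Union>c\<in>C'. {y. c < g y})"
    using compactE_image[OF K(1), of "{c. m < c}" "\<lambda>c. {y. c < g y}"] op by blast
  have "C' \<noteq> {}" using C'(3) K(2) by auto
  define c0 where "c0 = Min C'"
  have "m < c0" using C' \<open>C' \<noteq> {}\<close> unfolding c0_def by auto
  have "\<forall>y\<in>K. c0 \<le> g y"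
  proof
    fix y assume "y \<in> K"
    then obtain c where "c \<in> C'" "c < g y" using C'(3) by auto
    then show "c0 \<le> g y" unfolding c0_def using C'(2) by (meson Min_le less_imp_le order_trans)
  qed
  then have "c0 \<le> m" unfolding m_def by (simp add: le_INF_iff)
  with \<open>m < c0\<close> show False by simp
qed

lemma convex_lsc_efun_affine_minorant:
  fixes h :: "'a::euclidean_space \<Rightarrow> ereal"
  assumes pr: "proper_fun h" and ls: "lsc_fun h" and cv: "convex_efun h"
  obtains x1 H1 M where "h x1 = ereal H1" "M \<ge> 0"
    "\<And>y. 1 \<le> norm (y - x1) \<Longrightarrow> ereal (H1 - M * norm (y - x1)) \<le> h y"
proof -
  obtain x1 where x1: "h x1 < \<infinity>" using pr unfolding proper_fun_def by blast
  have ninf: "\<And>y. h y \<noteq> -\<infinity>" using pr unfolding proper_fun_def by blast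
  have cvD: "convex (edom h)" and cvf: "convex_on (edom h) (\<lambda>x. real_of_ereal (h x))"
    using cv unfolding convex_efun_def by auto
  obtain y1 where y1: "y1 \<in> cball x1 1" "\<forall>u\<in>cball x1 1. h y1 \<le> h u"
    using open_superlevel_attains_min[OF lsc_fun_open_superlevel[OF ls], of "cball x1 1"] by auto
  define H1 where "H1 = real_of_ereal (h x1)"
  define Hm where "Hm = real_of_ereal (h y1)"
  have hx1: "h x1 = ereal H1" using x1 ninf[of x1] unfolding H1_def by (cases "h x1") auto
  have "h y1 \<le> h x1" using y1 by auto
  then have hy1: "h y1 = ereal Hm" using x1 ninf[of y1] unfolding Hm_def by (cases "h y1") auto
  define M where "M = H1 - Hm"
  have M0: "M \<ge> 0" using \<open>h y1 \<le> h x1\<close> hx1 hy1 M_def by simp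
  have "ereal (H1 - M * norm (y - x1)) \<le> h y" if r1: "1 \<le> norm (y - x1)" for y
  proof (cases "h y = \<infinity>")
    case True then show ?thesis by simp
  next
    case False
    then obtain Y where hy: "h y = ereal Y" using ninf[of y] by (cases "h y") auto
    define r where "r = norm (y - x1)"
    define t where "t = 1 / r"
    have r1': "r \<ge> 1" using r1 r_def by simp
    have t01: "0 \<le> t" "t \<le> 1" using r1' t_def by auto
    define p where "p = (1 - t) *\<^sub>R x1 + t *\<^sub>R y"
    have x1D: "x1 \<in> edom h" and yD: "y \<in> edom h" using x1 hy unfolding edom_def by auto
    have pD: "p \<in> edom h" unfolding p_def by (rule convexD_alt[OF cvD x1D yD t01])
    have "p - x1 = t *\<^sub>R (y - x1)" unfolding p_def by (simp add: algebra_simps)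
    then have "norm (p - x1) = 1" using r1' unfolding t_def r_def by (cases "y = x1") auto
    then have "p \<in> cball x1 1" by (simp add: dist_norm norm_minus_commute)
    then have "h y1 \<le> h p" using y1 by auto
    moreover have "real_of_ereal (h p) \<le> (1 - t) * H1 + t * Y"
      using convex_onD[OF cvf t01 x1D yD] unfolding p_def H1_def hy by simp
    moreover have "h p \<noteq> \<infinity>" using pD unfolding edom_def by simp
    ultimately have "Hm \<le> (1 - t) * H1 + t * Y" using hy1 ninf[of p] by (cases "h p") auto
    then have "r * Hm \<le> r * ((1 - t) * H1 + t * Y)" using r1' by (simp add: mult_left_mono)
    also have "\<dots> = (r - 1) * H1 + Y" using r1' unfolding t_def by (simp add: field_simps)
    finally have "H1 - M * r \<le> Y" unfolding M_def by (simp add: algebra_simps)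
    then show ?thesis using hy r_def by simp
  qed
  with hx1 M0 show thesis using that by blast
qed

lemma prox_objective_attains_min:
  fixes h :: "'a::euclidean_space \<Rightarrow> ereal"
  assumes pr: "proper_fun h" and ls: "lsc_fun h" and cv: "convex_efun h" and eta: "\<eta> > 0"
  shows "\<exists>y. \<forall>w. h y + ereal ((norm (y - z))\<^sup>2 / (2 * \<eta>)) \<le> h w + ereal ((norm (w - z))\<^sup>2 / (2 * \<eta>))"
proof -
  obtain x1 H1 M where hx1: "h x1 = ereal H1" and M0: "M \<ge> 0"
    and lower: "\<And>y. 1 \<le> norm (y - x1) \<Longrightarrow> ereal (H1 - M * norm (y - x1)) \<le> h y"
    using convex_lsc_efun_affine_minorant[OF pr ls cv] by blast
  have ninf: "\<And>y. h y \<noteq> -\<infinity>" using pr unfolding proper_fun_def by blast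
  have op: "\<And>c. open {y. c < h y}" using lsc_fun_open_superlevel[OF ls] .
  define q where "q = (\<lambda>y. (norm (y - z))\<^sup>2 / (2 * \<eta>))"
  define a where "a = norm (x1 - z)"
  \<comment> \<open>Outside \<open>cball x1 R\<close> the objective exceeds its value at \<open>x1\<close>, so a minimiser over this compact ball is global.\<close>
  define R where "R = 2 * a + 2 * \<eta> * M + 1"
  have far: "h x1 + ereal (q x1) \<le> h y + ereal (q y)" if yR: "R < norm (y - x1)" for y
  proof -
    define r where "r = norm (y - x1)"
    have a0: "a \<ge> 0" unfolding a_def by simp
    have rR: "r > 2 * a + 2 * \<eta> * M + 1" using yR r_def R_def by simp
    have "r \<ge> 1" using rR a0 M0 eta by (smt (verit) mult_nonneg_nonneg)
    have tri: "r - a \<le> norm (y - z)"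
      using norm_triangle_ineq4[of "y - z" "x1 - z"] unfolding r_def a_def by (simp add: algebra_simps)
    have "r - a \<ge> 0" using rR a0 M0 eta by (smt (verit) mult_nonneg_nonneg)
    then have "(r - a)\<^sup>2 \<le> (norm (y - z))\<^sup>2" using tri by (simp add: power_mono)
    then have qy: "(r - a)\<^sup>2 / (2 * \<eta>) \<le> q y" unfolding q_def using eta by (simp add: divide_right_mono)
    have key: "a\<^sup>2 \<le> (r - a)\<^sup>2 - 2 * \<eta> * M * r"
    proof -
      have "0 \<le> r * (r - 2 * a - 2 * \<eta> * M)" using rR \<open>r \<ge> 1\<close> by simp
      then show ?thesis by (simp add: power2_eq_square algebra_simps)
    qed
    have "H1 + q x1 \<le> (H1 - M * r) + (r - a)\<^sup>2 / (2 * \<eta>)"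
    proof -
      have "q x1 = a\<^sup>2 / (2 * \<eta>)" unfolding q_def a_def by simp
      also have "\<dots> \<le> ((r - a)\<^sup>2 - 2 * \<eta> * M * r) / (2 * \<eta>)" using key eta by (simp add: divide_right_mono)
      also have "\<dots> = (r - a)\<^sup>2 / (2 * \<eta>) - M * r" using eta by (simp add: field_simps)
      finally show ?thesis by simp
    qed
    also have "\<dots> \<le> (H1 - M * r) + q y" using qy by simp
    finally have "ereal (H1 + q x1) \<le> ereal (H1 - M * r) + ereal (q y)" by simp
    also have "\<dots> \<le> h y + ereal (q y)" using lower[of y] \<open>r \<ge> 1\<close> r_def by (intro add_right_mono) auto
    finally show ?thesis using hx1 by simp
  qed
  have qc: "continuous_on UNIV q" unfolding q_def using eta by (intro continuous_intros) auto
  obtain ys where ys: "ys \<in> cball x1 R" "\<forall>u\<in>cball x1 R. h ys + ereal (q ys) \<le> h u + ereal (q u)"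
    using open_superlevel_attains_min[OF open_superlevel_add_continuous[OF op ninf qc], of "cball x1 R"] eta M0
    by (smt (verit, ccfv_threshold) R_def a_def centre_in_cball compact_cball empty_iff mult_nonneg_nonneg norm_ge_zero)
  have "x1 \<in> cball x1 R" unfolding R_def a_def using eta M0 by simp
  have "\<forall>w. h ys + ereal (q ys) \<le> h w + ereal (q w)"
  proof
    fix w
    show "h ys + ereal (q ys) \<le> h w + ereal (q w)"
    proof (cases "w \<in> cball x1 R")
      case True then show ?thesis using ys by auto
    next
      case False
      then have "R < norm (w - x1)" by (simp add: dist_norm norm_minus_commute)
      then have "h x1 + ereal (q x1) \<le> h w + ereal (q w)" by (rule far)
      moreover have "h ys + ereal (q ys) \<le> h x1 + ereal (q x1)" using ys \<open>x1 \<in> cball x1 R\<close> by auto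
      ultimately show ?thesis by simp
    qed
  qed
  then show ?thesis unfolding q_def by blast
qed

lemma prox_optimality:
  fixes h :: "'a::euclidean_space \<Rightarrow> ereal"
  assumes pr: "proper_fun h" and ls: "lsc_fun h" and cv: "convex_efun h" and eta: "\<eta> > 0"
    and y: "y = prox \<eta> h z"
  shows "y \<in> edom h"
    and "\<And>w. w \<in> edom h \<Longrightarrow> real_of_ereal (h y) - real_of_ereal (h w) \<le> ((y - z) \<bullet> (w - y)) / \<eta>"
proof -
  define q where "q = (\<lambda>y. (norm (y - z))\<^sup>2 / (2 * \<eta>))"
  have miny: "\<forall>w. h y + ereal (q y) \<le> h w + ereal (q w)"
    using someI_ex[OF prox_objective_attains_min[OF pr ls cv eta, of z]] unfolding y prox_def q_def by blast
  have ninf: "\<And>y. h y \<noteq> -\<infinity>" using pr unfolding proper_fun_def by blast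
  obtain x1 where x1: "h x1 < \<infinity>" using pr unfolding proper_fun_def by blast
  have "h x1 + ereal (q x1) < \<infinity>" using x1 by simp
  then have "h y + ereal (q y) < \<infinity>" using miny le_less_trans by blast
  then show yD: "y \<in> edom h" unfolding edom_def by auto
  fix w assume wD: "w \<in> edom h"
  have cvD: "convex (edom h)" and cvf: "convex_on (edom h) (\<lambda>x. real_of_ereal (h x))"
    using cv unfolding convex_efun_def by auto
  obtain Y where hy: "h y = ereal Y" using yD ninf[of y] unfolding edom_def by (cases "h y") auto
  obtain W where hw: "h w = ereal W" using wD ninf[of w] unfolding edom_def by (cases "h w") auto
  define B where "B = (norm (w - y))\<^sup>2"
  define A where "A = W - Y + ((y - z) \<bullet> (w - y)) / \<eta>"
  have ineq: "0 \<le> A + t * B / (2 * \<eta>)" if t: "0 < t" "t \<le> 1" for t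
  proof -
    define wt where "wt = (1 - t) *\<^sub>R y + t *\<^sub>R w"
    have t01: "0 \<le> t" "t \<le> 1" using t by auto
    have wtD: "wt \<in> edom h" unfolding wt_def by (rule convexD_alt[OF cvD yD wD t01])
    have cvi: "real_of_ereal (h wt) \<le> (1 - t) * Y + t * W"
      using convex_onD[OF cvf t01 yD wD] unfolding wt_def hy hw by simp
    obtain Wt where hwt: "h wt = ereal Wt" using wtD ninf[of wt] unfolding edom_def by (cases "h wt") auto
    have "h y + ereal (q y) \<le> h wt + ereal (q wt)" using miny by blast
    then have m: "Y + q y \<le> Wt + q wt" using hy hwt by simp
    have e: "wt - z = (y - z) + t *\<^sub>R (w - y)" unfolding wt_def by (simp add: algebra_simps)
    have "(norm (wt - z))\<^sup>2 = (norm (y - z))\<^sup>2 + 2 * t * ((y - z) \<bullet> (w - y)) + t\<^sup>2 * B"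
      unfolding B_def e power2_norm_add by (simp add: power_mult_distrib)
    then have qwt: "q wt = q y + (2 * t * ((y - z) \<bullet> (w - y)) + t\<^sup>2 * B) / (2 * \<eta>)"
      unfolding q_def using eta by (simp add: field_simps)
    have "0 \<le> t * (W - Y) + (2 * t * ((y - z) \<bullet> (w - y)) + t\<^sup>2 * B) / (2 * \<eta>)"
      using m cvi hwt qwt by (simp add: algebra_simps)
    also have "\<dots> = t * (A + t * B / (2 * \<eta>))"
      unfolding A_def using eta by (simp add: field_simps power2_eq_square)
    finally show ?thesis using t by (simp add: zero_le_mult_iff)
  qed
  have "0 \<le> A"
  proof (rule ccontr)
    assume "\<not> 0 \<le> A"
    then have A0: "A < 0" by simp
    have B0: "B \<ge> 0" unfolding B_def by simp
    show False
    proof (cases "B = 0")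
      case True then show False using ineq[of 1] A0 by simp
    next
      case False
      then have Bp: "B > 0" using B0 by simp
      define t where "t = min 1 (- A * \<eta> / B)"
      have tp: "0 < t" "t \<le> 1" unfolding t_def using A0 Bp eta by (auto simp: divide_neg_pos mult_neg_pos)
      have "t * B / (2 * \<eta>) \<le> (- A * \<eta> / B) * B / (2 * \<eta>)"
        unfolding t_def using Bp eta by (intro divide_right_mono mult_right_mono) auto
      also have "\<dots> = - A / 2" using Bp eta by (simp add: field_simps)
      finally show False using ineq[OF tp] A0 by simp
    qed
  qed
  then show "real_of_ereal (h y) - real_of_ereal (h w) \<le> ((y - z) \<bullet> (w - y)) / \<eta>"
    unfolding A_def hy hw by simp
qed

lemma nn_integral_pmf_const_add:
  fixes M :: "'b pmf"
  shows "(\<integral>\<^sup>+x. c + f x \<partial>measure_pmf M) = c + (\<integral>\<^sup>+x. f x \<partial>measure_pmf M)"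
  by (subst nn_integral_add) (auto simp: measure_pmf.emeasure_space_1)

lemma nn_integral_pmf_eq_expectation:
  fixes M :: "'b pmf" and f :: "'b \<Rightarrow> real"
  assumes "finite (set_pmf M)" "\<And>x. x \<in> set_pmf M \<Longrightarrow> 0 \<le> f x"
  shows "(\<integral>\<^sup>+x. ennreal (f x) \<partial>measure_pmf M) = ennreal (measure_pmf.expectation M f)"
  by (rule nn_integral_eq_integral[OF integrable_measure_pmf_finite[OF assms(1)]])
     (use assms(2) in \<open>auto simp: AE_measure_pmf_iff\<close>)

lemma set_pmf_unif_list: "l \<noteq> [] \<Longrightarrow> set_pmf (unif_list l) = set l"
  unfolding unif_list_def by (auto simp: set_pmf_of_set lessThan_empty_iff in_set_conv_nth)

lemma nn_integral_unif_list:
  assumes "l \<noteq> []"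
  shows "(\<integral>\<^sup>+x. f x \<partial>measure_pmf (unif_list l)) = sum_list (map f l) / of_nat (length l)"
proof -
  have "(\<integral>\<^sup>+x. f x \<partial>measure_pmf (unif_list l)) = (\<Sum>i\<in>{..<length l}. f (l ! i)) / of_nat (length l)"
    unfolding unif_list_def nn_integral_map_pmf using assms by (subst nn_integral_pmf_of_set) auto
  also have "(\<Sum>i\<in>{..<length l}. f (l ! i)) = sum_list (map f l)"
    by (simp add: sum_list_sum_nth atLeast0LessThan)
  finally show ?thesis .
qed

lemma nn_integral_bind_unif_list_le:
  fixes E :: "'a list pmf" and \<phi> :: "'a \<Rightarrow> ennreal"
  assumes len: "\<And>l. l \<in> set_pmf E \<Longrightarrow> length l = N" and N: "N \<ge> 1"
    and \<rho>: "\<rho> > 0" "2 \<le> real N * \<rho>"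
    and bound: "(\<integral>\<^sup>+l. ennreal \<rho> * sum_list (map \<phi> l) \<partial>measure_pmf E) \<le> B"
  shows "(\<integral>\<^sup>+x. \<phi> x \<partial>measure_pmf (E \<bind> unif_list)) \<le> B / 2"
proof -
  define S where "S = (\<integral>\<^sup>+l. sum_list (map \<phi> l) \<partial>measure_pmf E)"
  have unif: "(\<integral>\<^sup>+x. \<phi> x \<partial>measure_pmf (unif_list l)) = sum_list (map \<phi> l) / of_nat N"
    if "l \<in> set_pmf E" for l
    using len[OF that] N by (subst nn_integral_unif_list) auto
  have "(\<integral>\<^sup>+x. \<phi> x \<partial>measure_pmf (E \<bind> unif_list))
      = (\<integral>\<^sup>+l. sum_list (map \<phi> l) / of_nat N \<partial>measure_pmf E)"
    using unif by (auto simp: AE_measure_pmf_iff intro!: nn_integral_cong_AE)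
  also have "\<dots> = S / of_nat N"
    unfolding S_def by (simp add: nn_integral_divide)
  also have "\<dots> \<le> ennreal (\<rho> / 2) * S"
  proof -
    have "1 / real N \<le> \<rho> / 2" using \<rho> N by (simp add: field_simps)
    then have "ennreal (1 / real N) * S \<le> ennreal (\<rho> / 2) * S"
      by (intro mult_right_mono ennreal_leI) auto
    moreover have "S / of_nat N = ennreal (1 / real N) * S"
      using N by (metis divide_ennreal ennreal_1 ennreal_of_nat_eq_real_of_nat ennreal_times_divide
          mult.commute mult.right_neutral of_nat_0_less_iff order_less_le_trans zero_less_one zero_le_one)
    ultimately show ?thesis by simp
  qed
  also have "\<dots> = (ennreal \<rho> * S) / 2"
    using \<rho> by (metis divide_ennreal_def ennreal_divide_numeral less_eq_real_def mult.commute mult.left_commute)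
  also have "ennreal \<rho> * S \<le> B"
    using bound unfolding S_def by (simp add: nn_integral_cmult)
  finally show ?thesis by (simp add: divide_right_mono_ennreal)
qed

lemma restart_halving:
  fixes Q :: "nat \<Rightarrow> 'a pmf" and P :: "'a \<Rightarrow> 'a pmf" and \<phi> :: "'a \<Rightarrow> ennreal"
  assumes Q0: "Q 0 = return_pmf x0" and QSuc: "\<And>k. Q (Suc k) = Q k \<bind> P" and x0: "x0 \<in> D"
    and P_dom: "\<And>y. y \<in> D \<Longrightarrow> set_pmf (P y) \<subseteq> D"
    and P_half: "\<And>y. y \<in> D \<Longrightarrow> (\<integral>\<^sup>+x. \<phi> x \<partial>measure_pmf (P y)) \<le> \<phi> y / 2"
  shows "set_pmf (Q K) \<subseteq> D \<and> (\<integral>\<^sup>+x. \<phi> x \<partial>measure_pmf (Q K)) \<le> \<phi> x0 / 2 ^ K"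
proof (induction K)
  case 0
  then show ?case using Q0 x0 by (simp add: divide_ennreal_def)
next
  case (Suc K)
  then have dom: "set_pmf (Q K) \<subseteq> D" and IH: "(\<integral>\<^sup>+x. \<phi> x \<partial>measure_pmf (Q K)) \<le> \<phi> x0 / 2 ^ K"
    by auto
  have "(\<integral>\<^sup>+x. \<phi> x \<partial>measure_pmf (Q (Suc K)))
      = (\<integral>\<^sup>+y. (\<integral>\<^sup>+x. \<phi> x \<partial>measure_pmf (P y)) \<partial>measure_pmf (Q K))"
    by (simp add: QSuc)
  also have "\<dots> \<le> (\<integral>\<^sup>+y. \<phi> y / 2 \<partial>measure_pmf (Q K))"
    using dom P_half by (intro nn_integral_mono_AE) (auto simp: AE_measure_pmf_iff)
  also have "\<dots> = (\<integral>\<^sup>+y. \<phi> y \<partial>measure_pmf (Q K)) / 2"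
    by (simp add: nn_integral_divide)
  also have "\<dots> \<le> \<phi> x0 / 2 ^ K / 2"
    using IH by (rule divide_right_mono_ennreal)
  also have "\<dots> = \<phi> x0 / 2 ^ Suc K"
    by (simp add: divide_ennreal_def ennreal_inverse_mult power_less_top_ennreal mult_ac)
  finally show ?case
    using dom P_dom by (auto simp: QSuc)
qed

section \<open>One proximal step under the PL condition\<close>

locale PL_finite_sum =
  fixes n :: nat and L \<mu> :: real
    and fs :: "nat \<Rightarrow> 'a::euclidean_space \<Rightarrow> real"
    and gs :: "nat \<Rightarrow> 'a \<Rightarrow> 'a"
    and h :: "'a \<Rightarrow> ereal"
    and xstar :: 'a
  assumes n_pos: "n \<ge> 1"
    and grad: "\<forall>i\<in>{1..n}. \<forall>x. (fs i has_derivative (\<lambda>v. gs i x \<bullet> v)) (at x)"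
    and L_pos: "L > 0"
    and smooth: "\<forall>i\<in>{1..n}. \<forall>x y. norm (gs i x - gs i y) \<le> L * norm (x - y)"
    and h_proper: "proper_fun h"
    and h_lsc: "lsc_fun h"
    and h_convex: "convex_efun h"
    and xstar_min: "\<forall>x. Fobj n fs h xstar \<le> Fobj n fs h x"
    and PL: "is_PL \<mu> (Fobj n fs h) (gavg n gs) h xstar"
    and mu_L: "\<mu> \<le> L"
begin

definition "D = edom h"
definition "hr x = real_of_ereal (h x)"
definition "Fr x = favg n fs x + hr x"
definition "\<Delta> x = Fr x - Fr xstar"
definition "\<eta> = 1 / (5 * L)"

lemma mu_pos: "\<mu> > 0" using PL unfolding is_PL_def by simp

lemma eta_pos: "\<eta> > 0" unfolding \<eta>_def using L_pos by simp

lemma h_ninf: "h x \<noteq> -\<infinity>" using h_proper unfolding proper_fun_def by blast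

lemma h_eq_ereal_hr: "x \<in> D \<Longrightarrow> h x = ereal (hr x)"
  unfolding D_def edom_def hr_def using h_ninf[of x] by (cases "h x") auto

lemma Fobj_eq_ereal_Fr: "x \<in> D \<Longrightarrow> Fobj n fs h x = ereal (Fr x)"
  unfolding Fobj_def Fr_def using h_eq_ereal_hr by simp

lemma xstar_in_D: "xstar \<in> D"
proof -
  obtain x1 where "h x1 < \<infinity>" using h_proper unfolding proper_fun_def by blast
  then have "Fobj n fs h x1 < \<infinity>" unfolding Fobj_def by simp
  then have "Fobj n fs h xstar < \<infinity>" using xstar_min le_less_trans by blast
  then show ?thesis unfolding Fobj_def D_def edom_def by auto
qed

lemma Delta_nonneg: "x \<in> D \<Longrightarrow> \<Delta> x \<ge> 0"
  using xstar_min[rule_format, of x] Fobj_eq_ereal_Fr[of x] Fobj_eq_ereal_Fr[OF xstar_in_D] unfolding \<Delta>_def by simp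

lemma ennreal_mult_Delta:
  "x \<in> D \<Longrightarrow> ennreal (\<eta> * \<mu>) * ennreal (\<Delta> x) = ennreal (\<eta> * \<mu> * \<Delta> x)"
  using eta_pos mu_pos Delta_nonneg by (simp add: ennreal_mult)

lemma favg_descent: "favg n fs y \<le> favg n fs x + gavg n gs x \<bullet> (y - x) + L / 2 * (norm (y - x))\<^sup>2"
proof -
  have "\<And>i. i \<in> {1..n} \<Longrightarrow> fs i y \<le> fs i x + gs i x \<bullet> (y - x) + L / 2 * (norm (y - x))\<^sup>2"
    using grad smooth by (intro smooth_upper_bound) auto
  then have "(\<Sum>i=1..n. fs i y) \<le> (\<Sum>i=1..n. fs i x + gs i x \<bullet> (y - x) + L / 2 * (norm (y - x))\<^sup>2)"
    by (rule sum_mono)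
  also have "\<dots> = (\<Sum>i=1..n. fs i x) + (\<Sum>i=1..n. gs i x) \<bullet> (y - x) + real n * (L / 2 * (norm (y - x))\<^sup>2)"
    by (simp add: sum.distrib inner_sum_left)
  finally have "(\<Sum>i=1..n. fs i y) / real n \<le> ((\<Sum>i=1..n. fs i x) + (\<Sum>i=1..n. gs i x) \<bullet> (y - x) + real n * (L / 2 * (norm (y - x))\<^sup>2)) / real n"
    using n_pos by (simp add: divide_right_mono)
  then show ?thesis using n_pos unfolding favg_def gavg_def by (simp add: add_divide_distrib)
qed

lemma PL_le_neg_Delta:
  assumes xD: "x \<in> D"
    and c: "\<And>u. u \<in> D \<Longrightarrow> c \<le> gavg n gs x \<bullet> (u - x) + \<mu> / 2 * (norm (u - x))\<^sup>2 + hr u - hr x"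
  shows "c \<le> - \<Delta> x"
proof -
  let ?I = "INF y. ereal (gavg n gs x \<bullet> (y - x) + \<mu> / 2 * (norm (y - x))\<^sup>2) + h y - h x"
  have lo: "ereal c \<le> ?I"
  proof (rule INF_greatest)
    fix u
    show "ereal c \<le> ereal (gavg n gs x \<bullet> (u - x) + \<mu> / 2 * (norm (u - x))\<^sup>2) + h u - h x"
    proof (cases "u \<in> D")
      case True
      then show ?thesis using c[OF True] h_eq_ereal_hr[OF True] h_eq_ereal_hr[OF xD] by simp
    next
      case False
      then have "h u = \<infinity>" unfolding D_def edom_def by simp
      then show ?thesis using h_eq_ereal_hr[OF xD] by simp
    qed
  qed
  have up: "?I \<le> ereal 0"
    by (rule INF_lower2[of x]) (use h_eq_ereal_hr[OF xD] in simp_all)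
  obtain i where Ii: "?I = ereal i" using lo up by (cases ?I) auto
  have "ereal \<mu> * (Fobj n fs h x - Fobj n fs h xstar) \<le> ereal (1/2) * Dh (gavg n gs) h x \<mu>"
    using PL xD unfolding is_PL_def D_def by blast
  then have "\<mu> * \<Delta> x \<le> 1/2 * (-2 * \<mu> * i)"
    unfolding Dh_def Ii using Fobj_eq_ereal_Fr[OF xD] Fobj_eq_ereal_Fr[OF xstar_in_D] unfolding \<Delta>_def by simp
  then have "\<mu> * \<Delta> x \<le> \<mu> * (- i)" by simp
  then have "\<Delta> x \<le> - i" using mu_pos by (simp only: mult_le_cancel_left_pos)
  then show ?thesis using lo Ii by simp
qed

lemma prox_step_comparison:
  assumes xD: "x \<in> D" and y: "y = prox \<eta> h (x - \<eta> *\<^sub>R v)" and uD: "u \<in> D"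
  shows "Fr y - Fr x - \<eta> / 2 * (norm (gavg n gs x - v))\<^sup>2 + 2 * L * (norm (y - x))\<^sup>2
    \<le> \<eta> * \<mu> * (gavg n gs x \<bullet> (u - x) + \<mu> / 2 * (norm (u - x))\<^sup>2 + hr u - hr x)"
proof -
  note po = prox_optimality[OF h_proper h_lsc h_convex eta_pos y]
  define g where "g = gavg n gs x"
  define lam where "lam = \<eta> * \<mu>"
  define \<beta> where "\<beta> = 5 * L"
  have lam_eq: "lam = \<mu> / \<beta>" unfolding lam_def \<eta>_def \<beta>_def by simp
  have beta_pos: "\<beta> > 0" unfolding \<beta>_def using L_pos by simp
  have lam01: "0 < lam" "lam \<le> 1" unfolding lam_eq using mu_pos mu_L L_pos \<beta>_def by auto
  have eta_beta: "\<eta> = 1 / \<beta>" unfolding \<eta>_def \<beta>_def by simp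
  define a where "a = y - x"
  have cvD: "convex D" and cvf: "convex_on D hr"
    using h_convex unfolding convex_efun_def D_def hr_def by auto
  define w where "w = (1 - lam) *\<^sub>R x + lam *\<^sub>R u"
  define e where "e = w - x"
  have e_eq: "e = lam *\<^sub>R (u - x)" unfolding e_def w_def by (simp add: algebra_simps)
  have wD: "w \<in> D" unfolding w_def using lam01 by (intro convexD_alt[OF cvD xD uD]) auto
  have p1: "hr y - hr w \<le> ((y - (x - \<eta> *\<^sub>R v)) \<bullet> (w - y)) / \<eta>"
    using po(2)[of w] wD unfolding D_def hr_def by simp
  have "y - (x - \<eta> *\<^sub>R v) = a + \<eta> *\<^sub>R v" unfolding a_def by simp
  moreover have "w - y = e - a" unfolding a_def e_def by simp
  ultimately have p2: "hr y - hr w \<le> \<beta> * (a \<bullet> e - (norm a)\<^sup>2) + (v \<bullet> e - v \<bullet> a)"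
    using p1 eta_pos unfolding eta_beta
    by (simp add: inner_add_left inner_diff_right power2_norm_eq_inner field_simps)
  have cvx: "hr w \<le> (1 - lam) * hr x + lam * hr u"
    unfolding w_def using lam01 by (intro convex_onD[OF cvf]) (auto simp: xD uD)
  have desc: "favg n fs y \<le> favg n fs x + g \<bullet> a + L / 2 * (norm a)\<^sup>2"
    unfolding g_def a_def by (rule favg_descent)
  have kv0: "0 \<le> (norm (g - v))\<^sup>2 / (2 * \<beta>) + (g - v) \<bullet> (e - a) + \<beta> / 2 * (norm (e - a))\<^sup>2"
    by (rule Young_inner_nonneg[OF beta_pos])
  have kv: "0 \<le> (norm (g - v))\<^sup>2 / (2 * \<beta>) + (g \<bullet> e - g \<bullet> a - v \<bullet> e + v \<bullet> a)
     + \<beta> / 2 * ((norm e)\<^sup>2 - 2 * (a \<bullet> e) + (norm a)\<^sup>2)"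
  proof -
    have "(norm (e - a))\<^sup>2 = (norm e)\<^sup>2 - 2 * (a \<bullet> e) + (norm a)\<^sup>2"
      by (simp add: power2_norm_eq_inner inner_diff_left inner_diff_right inner_commute)
    moreover have "(g - v) \<bullet> (e - a) = g \<bullet> e - g \<bullet> a - v \<bullet> e + v \<bullet> a"
      by (simp add: inner_diff_left inner_diff_right)
    ultimately show ?thesis using kv0 by simp
  qed
  have ge: "g \<bullet> e = lam * (g \<bullet> (u - x))" unfolding e_eq by simp
  have ne: "\<beta> / 2 * (norm e)\<^sup>2 = lam * (\<mu> / 2 * (norm (u - x))\<^sup>2)"
  proof -
    have "(norm e)\<^sup>2 = lam\<^sup>2 * (norm (u - x))\<^sup>2" unfolding e_eq using lam01 by (simp add: power_mult_distrib)
    moreover have "\<beta> * lam = \<mu>" unfolding lam_eq using beta_pos by simp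
    ultimately show ?thesis by (simp add: power2_eq_square algebra_simps)
  qed
  have eta2: "\<eta> / 2 * (norm (g - v))\<^sup>2 = (norm (g - v))\<^sup>2 / (2 * \<beta>)" unfolding eta_beta by simp
  have "Fr y - Fr x - \<eta> / 2 * (norm (g - v))\<^sup>2 + 2 * L * (norm a)\<^sup>2
     \<le> lam * (g \<bullet> (u - x) + \<mu> / 2 * (norm (u - x))\<^sup>2 + hr u - hr x)"
  proof -
    have "Fr y - Fr x \<le> g \<bullet> a + L / 2 * (norm a)\<^sup>2 + \<beta> * (a \<bullet> e - (norm a)\<^sup>2) + (v \<bullet> e - v \<bullet> a) + lam * (hr u - hr x)"
      using desc p2 cvx unfolding Fr_def by (simp add: algebra_simps)
    moreover have "lam * (g \<bullet> (u - x) + \<mu> / 2 * (norm (u - x))\<^sup>2 + hr u - hr x)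
        = g \<bullet> e + \<beta> / 2 * (norm e)\<^sup>2 + lam * (hr u - hr x)"
      using ge ne by (simp add: algebra_simps)
    moreover have "\<beta> / 2 * ((norm e)\<^sup>2 - 2 * (a \<bullet> e) + (norm a)\<^sup>2)
        = \<beta> / 2 * (norm e)\<^sup>2 - \<beta> * (a \<bullet> e) + \<beta> / 2 * (norm a)\<^sup>2" by (simp add: algebra_simps)
    moreover have "L / 2 * (norm a)\<^sup>2 - \<beta> * (norm a)\<^sup>2 + 2 * L * (norm a)\<^sup>2 = - (\<beta> / 2 * (norm a)\<^sup>2)"
      unfolding \<beta>_def by (simp add: algebra_simps)
    moreover have "\<beta> * (a \<bullet> e - (norm a)\<^sup>2) = \<beta> * (a \<bullet> e) - \<beta> * (norm a)\<^sup>2" by (simp add: algebra_simps)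
    ultimately show ?thesis using kv eta2 by linarith
  qed
  then show ?thesis unfolding lam_def g_def a_def .
qed

lemma prox_step_mem:
  "x \<in> D \<Longrightarrow> prox \<eta> h (x - \<eta> *\<^sub>R v) \<in> D"
  using prox_optimality(1)[OF h_proper h_lsc h_convex eta_pos refl] unfolding D_def .

lemma prox_step_descent:
  assumes xD: "x \<in> D" and y: "y = prox \<eta> h (x - \<eta> *\<^sub>R v)"
  shows "\<Delta> y + 2 * L * (norm (y - x))\<^sup>2 + \<eta> * \<mu> * \<Delta> x \<le> \<Delta> x + \<eta> / 2 * (norm (gavg n gs x - v))\<^sup>2"
proof -
  define N where "N = Fr y - Fr x - \<eta> / 2 * (norm (gavg n gs x - v))\<^sup>2 + 2 * L * (norm (y - x))\<^sup>2"
  have lam: "\<eta> * \<mu> > 0" using eta_pos mu_pos by simp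
  have "N / (\<eta> * \<mu>) \<le> - \<Delta> x"
  proof (rule PL_le_neg_Delta[OF xD])
    fix u assume "u \<in> D"
    from prox_step_comparison[OF xD y this] lam
    show "N / (\<eta> * \<mu>) \<le> gavg n gs x \<bullet> (u - x) + \<mu> / 2 * (norm (u - x))\<^sup>2 + hr u - hr x"
      unfolding N_def by (simp add: divide_le_eq mult.commute)
  qed
  then have "N \<le> - \<Delta> x * (\<eta> * \<mu>)"
    using lam by (simp add: divide_le_eq)
  then show ?thesis unfolding N_def \<Delta>_def by (simp add: algebra_simps)
qed

definition "vr_grad b I x \<alpha> =
  (1 / real b) *\<^sub>R (\<Sum>i\<leftarrow>I. gs i x - gs i (\<alpha> i)) + (1 / real n) *\<^sub>R (\<Sum>i=1..n. gs i (\<alpha> i))"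

(* For SVRG all anchors alpha i are the current snapshot. *)
definition "anchor_dist x \<alpha> = (\<Sum>i=1..n. (norm (x - \<alpha> i))\<^sup>2) / real n"

lemma anchor_dist_nonneg: "anchor_dist x \<alpha> \<ge> 0"
  unfolding anchor_dist_def by (simp add: sum_nonneg)

lemma anchor_dist_const: "anchor_dist x (\<lambda>_. y) = (norm (x - y))\<^sup>2"
  unfolding anchor_dist_def using n_pos by simp

lemma vr_grad_variance_le:
  assumes b: "b \<ge> 1"
  shows "measure_pmf.expectation (draw_idx n b) (\<lambda>I. (norm (gavg n gs x - vr_grad b I x \<alpha>))\<^sup>2)
     \<le> L\<^sup>2 / real b * anchor_dist x \<alpha>"
proof -
  define u where "u = (\<lambda>i. gs i x - gs i (\<alpha> i))"
  have dev: "(norm (gavg n gs x - vr_grad b I x \<alpha>))\<^sup>2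
      = (norm ((1 / real b) *\<^sub>R (\<Sum>i\<leftarrow>I. u i) - (1 / real n) *\<^sub>R (\<Sum>i=1..n. u i)))\<^sup>2" for I
  proof -
    have "gavg n gs x - vr_grad b I x \<alpha>
        = - ((1 / real b) *\<^sub>R (\<Sum>i\<leftarrow>I. u i) - (1 / real n) *\<^sub>R (\<Sum>i=1..n. u i))"
      unfolding vr_grad_def gavg_def u_def by (simp add: sum_subtractf algebra_simps)
    then show ?thesis by (simp only: norm_minus_cancel)
  qed
  have "measure_pmf.expectation (draw_idx n b) (\<lambda>I. (norm (gavg n gs x - vr_grad b I x \<alpha>))\<^sup>2)
      \<le> (\<Sum>i=1..n. (norm (u i))\<^sup>2) / (real b * real n)"
    unfolding dev by (rule expectation_minibatch_deviation_le[OF n_pos b])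
  also have "\<dots> \<le> (\<Sum>i=1..n. L\<^sup>2 * (norm (x - \<alpha> i))\<^sup>2) / (real b * real n)"
  proof -
    have "(norm (u i))\<^sup>2 \<le> L\<^sup>2 * (norm (x - \<alpha> i))\<^sup>2" if "i \<in> {1..n}" for i
    proof -
      have "norm (u i) \<le> L * norm (x - \<alpha> i)" using smooth that unfolding u_def by blast
      then have "(norm (u i))\<^sup>2 \<le> (L * norm (x - \<alpha> i))\<^sup>2" by (simp add: power_mono)
      then show ?thesis by (simp add: power_mult_distrib)
    qed
    then show ?thesis using b n_pos by (intro divide_right_mono sum_mono) auto
  qed
  also have "\<dots> = L\<^sup>2 / real b * anchor_dist x \<alpha>"
    unfolding anchor_dist_def by (simp add: sum_distrib_left[symmetric])
  finally show ?thesis .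
qed

section \<open>ProxSVRG\<close>

definition "svrg_next b xt x I = prox \<eta> h (x - \<eta> *\<^sub>R svrg_v gs b I x xt (gavg n gs xt))"

(* Weight of |x - snapshot|^2 at inner step t: each step lowers it by L m/(10 b), which pays for
   the variance, and it stays below 2L as long as m^2 <= b. *)
definition "svrg_weight b m t = L / (10 * real b) * real m * (real m - real t)"

lemma svrg_v_eq_vr_grad: "svrg_v gs b I x xt (gavg n gs xt) = vr_grad b I x (\<lambda>_. xt)"
  unfolding svrg_v_def vr_grad_def gavg_def by simp

lemma svrg_weight_bounds:
  assumes "b \<ge> 1" "real m * real m \<le> real b" "t \<le> m"
  shows "0 \<le> svrg_weight b m t" "svrg_weight b m t \<le> 2 * L"
proof -
  define \<gamma> where "\<gamma> = L / (10 * real b)"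
  have \<gamma>: "\<gamma> \<ge> 0" unfolding \<gamma>_def using L_pos by simp
  show "0 \<le> svrg_weight b m t"
    unfolding svrg_weight_def \<gamma>_def[symmetric] using \<gamma> assms(3) by (intro mult_nonneg_nonneg) auto
  have "svrg_weight b m t \<le> \<gamma> * real m * real m"
    unfolding svrg_weight_def \<gamma>_def[symmetric] using \<gamma> by (intro mult_left_mono) auto
  also have "\<dots> \<le> \<gamma> * real b" using assms(2) \<gamma> by (simp add: mult.assoc mult_left_mono)
  also have "\<dots> \<le> 2 * L" unfolding \<gamma>_def using assms(1) L_pos by simp
  finally show "svrg_weight b m t \<le> 2 * L" .
qed

lemma svrg_step_expectation:
  assumes b: "b \<ge> 1" and mb: "real m * real m \<le> real b" and xD: "x \<in> D"
    and A: "0 \<le> A" and dist: "(norm (x - xt))\<^sup>2 \<le> real t * A" and t: "t < m"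
  shows "measure_pmf.expectation (draw_idx n b) (\<lambda>I. \<eta> * \<mu> * \<Delta> x + \<Delta> (svrg_next b xt x I)
      + svrg_weight b m (Suc t) * (A + (norm (svrg_next b xt x I - x))\<^sup>2))
    \<le> \<Delta> x + svrg_weight b m t * A"
proof -
  define v where "v = (\<lambda>I. svrg_v gs b I x xt (gavg n gs xt))"
  define x' where "x' = svrg_next b xt x"
  define w where "w = svrg_weight b m (Suc t)"
  define E where "E = measure_pmf.expectation (draw_idx n b) (\<lambda>I. (norm (gavg n gs x - v I))\<^sup>2)"
  have w: "0 \<le> w" "w \<le> 2 * L" unfolding w_def using svrg_weight_bounds[OF b mb] t by auto
  have pointwise: "\<eta> * \<mu> * \<Delta> x + \<Delta> (x' I) + w * (A + (norm (x' I - x))\<^sup>2)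
      \<le> \<Delta> x + w * A + \<eta> / 2 * (norm (gavg n gs x - v I))\<^sup>2" for I
  proof -
    have "w * (norm (x' I - x))\<^sup>2 \<le> 2 * L * (norm (x' I - x))\<^sup>2" using w by (intro mult_right_mono) auto
    with prox_step_descent[OF xD, of "x' I" "v I"] show ?thesis
      unfolding x'_def v_def svrg_next_def by (simp add: algebra_simps)
  qed
  have "E \<le> L\<^sup>2 / real b * (norm (x - xt))\<^sup>2"
    using vr_grad_variance_le[OF b, of x "\<lambda>_. xt"]
    unfolding E_def v_def svrg_v_eq_vr_grad anchor_dist_const .
  then have "\<eta> / 2 * E \<le> L / (10 * real b) * (norm (x - xt))\<^sup>2"
    using eta_pos L_pos unfolding \<eta>_def by (simp add: power2_eq_square field_simps)
  also have "\<dots> \<le> L / (10 * real b) * (real t * A)"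
    using dist L_pos by (intro mult_left_mono) auto
  finally have var: "\<eta> / 2 * E \<le> L / (10 * real b) * real t * A" by simp
  have "w * A + L / (10 * real b) * real t * A \<le> svrg_weight b m t * A"
  proof -
    define \<gamma> where "\<gamma> = L / (10 * real b)"
    have "\<gamma> * real t \<le> \<gamma> * real m"
      unfolding \<gamma>_def using L_pos t by (intro mult_left_mono) auto
    then have "w + \<gamma> * real t \<le> svrg_weight b m t"
      unfolding w_def svrg_weight_def \<gamma>_def[symmetric] by (simp add: algebra_simps)
    then have "w + L / (10 * real b) * real t \<le> svrg_weight b m t" unfolding \<gamma>_def .
    then show ?thesis using A by (metis distrib_right mult_right_mono)
  qed
  have "measure_pmf.expectation (draw_idx n b) (\<lambda>I. \<eta> * \<mu> * \<Delta> x + \<Delta> (x' I) + w * (A + (norm (x' I - x))\<^sup>2))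
      \<le> measure_pmf.expectation (draw_idx n b) (\<lambda>I. \<Delta> x + w * A + \<eta> / 2 * (norm (gavg n gs x - v I))\<^sup>2)"
    by (intro integral_mono pointwise integrable_draw_idx[OF n_pos])
  also have "\<dots> = \<Delta> x + w * A + \<eta> / 2 * E"
    unfolding E_def by (simp add: integrable_draw_idx[OF n_pos])
  finally show ?thesis
    using var \<open>w * A + _ \<le> _\<close> unfolding x'_def w_def by linarith
qed

lemma svrg_inner_support:
  "x \<in> D \<Longrightarrow> p \<in> set_pmf (svrg_inner n gs h b \<eta> xt g k x) \<Longrightarrow>
     snd p \<in> D \<and> set (fst p) \<subseteq> D \<and> length (fst p) = k"
proof (induction k arbitrary: x p)
  case 0
  then show ?case by simp
next
  case (Suc k)
  from Suc.prems(2) obtain I q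
    where q: "q \<in> set_pmf (svrg_inner n gs h b \<eta> xt g k (prox \<eta> h (x - \<eta> *\<^sub>R svrg_v gs b I x xt g)))"
      and p: "p = (x # fst q, snd q)"
    by (auto simp: Let_def split: prod.splits)
  from Suc.IH[OF prox_step_mem[OF Suc.prems(1)] q] show ?case using p Suc.prems(1) by auto
qed

lemma svrg_inner_bound:
  assumes b: "b \<ge> 1" and mb: "real m * real m \<le> real b"
  shows "x \<in> D \<Longrightarrow> 0 \<le> A \<Longrightarrow> (norm (x - xt))\<^sup>2 \<le> real t * A \<Longrightarrow> t + k \<le> m \<Longrightarrow>
    (\<integral>\<^sup>+p. ennreal (\<Delta> (snd p)) + ennreal (\<eta> * \<mu>) * sum_list (map (\<lambda>z. ennreal (\<Delta> z)) (fst p))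
       \<partial>measure_pmf (svrg_inner n gs h b \<eta> xt (gavg n gs xt) k x))
    \<le> ennreal (\<Delta> x + svrg_weight b m t * A)"
proof (induction k arbitrary: x A t)
  case 0
  then show ?case
    using Delta_nonneg[of x] svrg_weight_bounds(1)[OF b mb, of t] by (simp add: ennreal_leI)
next
  case (Suc k)
  note xD = Suc.prems(1)
  define F where "F = (\<lambda>p :: 'a list \<times> 'a.
    ennreal (\<Delta> (snd p)) + ennreal (\<eta> * \<mu>) * sum_list (map (\<lambda>z. ennreal (\<Delta> z)) (fst p)))"
  define inner where "inner = svrg_inner n gs h b \<eta> xt (gavg n gs xt) k"
  define x' where "x' = svrg_next b xt x"
  define w where "w = svrg_weight b m (Suc t)"
  have x'D: "x' I \<in> D" for I unfolding x'_def svrg_next_def by (rule prox_step_mem[OF xD])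
  have w: "0 \<le> w" unfolding w_def using svrg_weight_bounds(1)[OF b mb] Suc.prems(4) by simp
  have IH: "(\<integral>\<^sup>+p. F p \<partial>measure_pmf (inner (x' I))) \<le> ennreal (\<Delta> (x' I) + w * (A + (norm (x' I - x))\<^sup>2))"
    for I
  proof -
    have "(norm ((x - xt) + (x' I - x)))\<^sup>2 \<le> (real t + 1) * (A + (norm (x' I - x))\<^sup>2)"
      using Suc.prems by (intro power2_norm_add_le_scaled) auto
    then show ?thesis
      using Suc.IH[of "x' I" "A + (norm (x' I - x))\<^sup>2" "Suc t", OF x'D] Suc.prems
      unfolding F_def inner_def w_def by (simp add: add.commute)
  qed
  have F_Cons: "F (x # l, xf) = ennreal (\<eta> * \<mu> * \<Delta> x) + F (l, xf)" for l xf
    unfolding F_def by (simp add: distrib_left add_ac ennreal_mult_Delta[OF xD])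
  have "(\<integral>\<^sup>+p. F p \<partial>measure_pmf (svrg_inner n gs h b \<eta> xt (gavg n gs xt) (Suc k) x))
      = (\<integral>\<^sup>+I. ennreal (\<eta> * \<mu> * \<Delta> x) + (\<integral>\<^sup>+p. F p \<partial>measure_pmf (inner (x' I))) \<partial>measure_pmf (draw_idx n b))"
    unfolding x'_def inner_def svrg_next_def
    by (simp add: Let_def case_prod_beta' F_Cons nn_integral_pmf_const_add)
  also have "\<dots> \<le> (\<integral>\<^sup>+I. ennreal (\<eta> * \<mu> * \<Delta> x + \<Delta> (x' I) + w * (A + (norm (x' I - x))\<^sup>2))
      \<partial>measure_pmf (draw_idx n b))"
  proof (intro nn_integral_mono)
    fix I
    have "ennreal (\<eta> * \<mu> * \<Delta> x + (\<Delta> (x' I) + w * (A + (norm (x' I - x))\<^sup>2)))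
        = ennreal (\<eta> * \<mu> * \<Delta> x) + ennreal (\<Delta> (x' I) + w * (A + (norm (x' I - x))\<^sup>2))"
      using eta_pos mu_pos Delta_nonneg[OF xD] Delta_nonneg[OF x'D] w Suc.prems(2) by (intro ennreal_plus) auto
    then show "ennreal (\<eta> * \<mu> * \<Delta> x) + (\<integral>\<^sup>+p. F p \<partial>measure_pmf (inner (x' I)))
        \<le> ennreal (\<eta> * \<mu> * \<Delta> x + \<Delta> (x' I) + w * (A + (norm (x' I - x))\<^sup>2))"
      using IH[of I] by (simp add: add.assoc add_left_mono)
  qed
  also have "\<dots> = ennreal (measure_pmf.expectation (draw_idx n b)
      (\<lambda>I. \<eta> * \<mu> * \<Delta> x + \<Delta> (x' I) + w * (A + (norm (x' I - x))\<^sup>2)))"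
    using eta_pos mu_pos Delta_nonneg[OF xD] Delta_nonneg[OF x'D] w Suc.prems(2)
    by (intro nn_integral_pmf_eq_expectation finite_set_pmf_draw_idx[OF n_pos]) auto
  also have "\<dots> \<le> ennreal (\<Delta> x + svrg_weight b m t * A)"
    using svrg_step_expectation[OF b mb xD Suc.prems(2,3)] Suc.prems(4)
    unfolding x'_def w_def by (intro ennreal_leI) simp
  finally show ?case unfolding F_def .
qed

lemma svrg_epochs_support:
  "xt \<in> D \<Longrightarrow> l \<in> set_pmf (svrg_epochs n gs h m b \<eta> s xt) \<Longrightarrow> set l \<subseteq> D \<and> length l = s * m"
proof (induction s arbitrary: xt l)
  case 0
  then show ?case by simp
next
  case (Suc s)
  from Suc.prems(2) obtain p r where p: "p \<in> set_pmf (svrg_inner n gs h b \<eta> xt (gavg n gs xt) m xt)"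
    and r: "r \<in> set_pmf (svrg_epochs n gs h m b \<eta> s (snd p))" and l: "l = fst p @ r"
    by (auto simp: case_prod_beta')
  have "snd p \<in> D \<and> set (fst p) \<subseteq> D \<and> length (fst p) = m"
    by (rule svrg_inner_support[OF Suc.prems(1) p])
  with Suc.IH[of "snd p" r] r show ?case using l by auto
qed

lemma svrg_epochs_bound:
  assumes b: "b \<ge> 1" and mb: "real m * real m \<le> real b"
  shows "xt \<in> D \<Longrightarrow> (\<integral>\<^sup>+l. ennreal (\<eta> * \<mu>) * sum_list (map (\<lambda>z. ennreal (\<Delta> z)) l)
       \<partial>measure_pmf (svrg_epochs n gs h m b \<eta> s xt)) \<le> ennreal (\<Delta> xt)"
proof (induction s arbitrary: xt)
  case 0
  then show ?case by simp
next
  case (Suc s)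
  define S where "S = (\<lambda>l. ennreal (\<eta> * \<mu>) * sum_list (map (\<lambda>z. ennreal (\<Delta> z)) l))"
  define inner where "inner = svrg_inner n gs h b \<eta> xt (gavg n gs xt) m xt"
  have "(\<integral>\<^sup>+l. S l \<partial>measure_pmf (svrg_epochs n gs h m b \<eta> (Suc s) xt))
      = (\<integral>\<^sup>+p. S (fst p) + (\<integral>\<^sup>+r. S r \<partial>measure_pmf (svrg_epochs n gs h m b \<eta> s (snd p)))
          \<partial>measure_pmf inner)"
    unfolding S_def inner_def by (simp add: case_prod_beta' distrib_left nn_integral_pmf_const_add)
  also have "\<dots> \<le> (\<integral>\<^sup>+p. ennreal (\<Delta> (snd p)) + S (fst p) \<partial>measure_pmf inner)"
    using Suc.IH svrg_inner_support[OF Suc.prems]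
    by (intro nn_integral_mono_AE) (auto simp: AE_measure_pmf_iff S_def inner_def add.commute intro: add_left_mono)
  also have "\<dots> \<le> ennreal (\<Delta> xt + svrg_weight b m 0 * 0)"
    unfolding S_def inner_def by (rule svrg_inner_bound[OF b mb Suc.prems]) auto
  finally show ?case unfolding S_def by simp
qed

lemma ProxSVRG_halves_gap:
  assumes b: "b \<ge> 1" and m: "m \<ge> 1" and mb: "real m * real m \<le> real b"
    and T: "T \<ge> 1" "2 \<le> real T * (\<eta> * \<mu>)" and x0D: "x0 \<in> D"
  shows "set_pmf (ProxSVRG n gs h x0 T m b \<eta>) \<subseteq> D"
    and "(\<integral>\<^sup>+x. ennreal (\<Delta> x) \<partial>measure_pmf (ProxSVRG n gs h x0 T m b \<eta>)) \<le> ennreal (\<Delta> x0) / 2"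
proof -
  define S where "S = nat \<lceil>real T / real m\<rceil>"
  define E where "E = svrg_epochs n gs h m b \<eta> S x0"
  have "real T / real m \<le> real S" unfolding S_def by linarith
  then have NT: "T \<le> S * m" using m by (simp add: divide_le_eq flip: of_nat_mult)
  then have N: "S * m \<ge> 1" using T(1) by linarith
  have supp: "set l \<subseteq> D \<and> length l = S * m" if "l \<in> set_pmf E" for l
    using svrg_epochs_support[OF x0D] that unfolding E_def by blast
  have PS: "ProxSVRG n gs h x0 T m b \<eta> = E \<bind> unif_list" unfolding ProxSVRG_def S_def E_def ..
  show "set_pmf (ProxSVRG n gs h x0 T m b \<eta>) \<subseteq> D"
  proof
    fix x assume "x \<in> set_pmf (ProxSVRG n gs h x0 T m b \<eta>)"
    then obtain l where l: "l \<in> set_pmf E" "x \<in> set_pmf (unif_list l)" unfolding PS by auto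
    moreover have "l \<noteq> []" using supp[OF l(1)] N by auto
    ultimately show "x \<in> D" using supp by (auto simp: set_pmf_unif_list)
  qed
  show "(\<integral>\<^sup>+x. ennreal (\<Delta> x) \<partial>measure_pmf (ProxSVRG n gs h x0 T m b \<eta>)) \<le> ennreal (\<Delta> x0) / 2"
    unfolding PS
  proof (rule nn_integral_bind_unif_list_le)
    show "2 \<le> real (S * m) * (\<eta> * \<mu>)"
      using T(2) NT eta_pos mu_pos by (smt (verit) mult_right_mono of_nat_le_iff zero_le_mult_iff)
    show "(\<integral>\<^sup>+l. ennreal (\<eta> * \<mu>) * sum_list (map (\<lambda>x. ennreal (\<Delta> x)) l) \<partial>measure_pmf E) \<le> ennreal (\<Delta> x0)"
      unfolding E_def by (rule svrg_epochs_bound[OF b mb x0D])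
  qed (use supp N eta_pos mu_pos in auto)
qed

section \<open>ProxSAGA\<close>

lemma anchor_dist_refresh_expectation:
  fixes x y :: 'a and \<alpha> :: "nat \<Rightarrow> 'a"
  assumes th: "\<theta> > 0"
  shows "measure_pmf.expectation (draw_idx n b) (\<lambda>J. anchor_dist y (\<lambda>j. if j \<in> set J then x else \<alpha> j))
    \<le> (1 + (1 - 1 / real n) ^ b / \<theta>) * (norm (y - x))\<^sup>2 + (1 - 1 / real n) ^ b * (1 + \<theta>) * anchor_dist x \<alpha>"
proof -
  define q where "q = (1 - 1 / real n) ^ b"
  define d where "d = (norm (y - x))\<^sup>2"
  have q0: "q \<ge> 0" unfolding q_def using n_pos by simp
  have "measure_pmf.expectation (draw_idx n b) (\<lambda>J. anchor_dist y (\<lambda>j. if j \<in> set J then x else \<alpha> j))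
     = (\<Sum>j=1..n. measure_pmf.expectation (draw_idx n b) (\<lambda>J. if j \<in> set J then d else (norm (y - \<alpha> j))\<^sup>2)) / real n"
    unfolding anchor_dist_def d_def by (simp add: integrable_draw_idx[OF n_pos] if_distrib[of "\<lambda>z. (norm (y - z))\<^sup>2"])
  also have "\<dots> = (\<Sum>j=1..n. d + ((norm (y - \<alpha> j))\<^sup>2 - d) * q) / real n"
    unfolding q_def by (intro arg_cong[where f="\<lambda>s. s / real n"] sum.cong refl expectation_draw_idx_member[OF n_pos]) auto
  also have "\<dots> = (1 - q) * d + q * ((\<Sum>j=1..n. (norm (y - \<alpha> j))\<^sup>2) / real n)"
    using n_pos by (simp add: sum.distrib sum_subtractf sum_distrib_left field_simps)
  also have "\<dots> \<le> (1 - q) * d + q * ((\<Sum>j=1..n. (1 + \<theta>) * (norm (x - \<alpha> j))\<^sup>2 + (1 + 1 / \<theta>) * d) / real n)"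
  proof -
    have "(\<Sum>j=1..n. (norm (y - \<alpha> j))\<^sup>2) \<le> (\<Sum>j=1..n. (1 + \<theta>) * (norm (x - \<alpha> j))\<^sup>2 + (1 + 1 / \<theta>) * d)"
    proof (rule sum_mono)
      fix j
      have "y - \<alpha> j = (x - \<alpha> j) + (y - x)" by simp
      then show "(norm (y - \<alpha> j))\<^sup>2 \<le> (1 + \<theta>) * (norm (x - \<alpha> j))\<^sup>2 + (1 + 1 / \<theta>) * d"
        unfolding d_def using power2_norm_add_le_Young[OF th, of "x - \<alpha> j" "y - x"] by simp
    qed
    then show ?thesis using q0 n_pos by (intro add_left_mono mult_left_mono divide_right_mono) auto
  qed
  also have "\<dots> = (1 + q / \<theta>) * d + q * (1 + \<theta>) * anchor_dist x \<alpha>"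
  proof -
    have eq: "(\<Sum>j=1..n. (1 + \<theta>) * (norm (x - \<alpha> j))\<^sup>2 + (1 + 1 / \<theta>) * d) / real n
        = (1 + \<theta>) * anchor_dist x \<alpha> + (1 + 1 / \<theta>) * d"
      unfolding anchor_dist_def using n_pos by (simp add: sum.distrib sum_distrib_left[symmetric] add_divide_distrib)
    show ?thesis unfolding eq using th by (simp add: field_simps)
  qed
  finally show ?thesis unfolding q_def d_def .
qed

definition "saga_next b \<alpha> x I = prox \<eta> h (x - \<eta> *\<^sub>R vr_grad b I x \<alpha>)"

lemma saga_step_expectation:
  assumes b: "b \<ge> 1" and th: "\<theta> > 0" and c0: "c \<ge> 0"
    and C1: "c * (1 + (1 - 1 / real n) ^ b / \<theta>) \<le> 2 * L"
    and C2: "L / (10 * real b) + c * ((1 - 1 / real n) ^ b * (1 + \<theta>)) \<le> c"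
    and xD: "x \<in> D"
  shows "measure_pmf.expectation (draw_idx n b) (\<lambda>I. measure_pmf.expectation (draw_idx n b)
      (\<lambda>J. \<eta> * \<mu> * \<Delta> x + \<Delta> (saga_next b \<alpha> x I)
        + c * anchor_dist (saga_next b \<alpha> x I) (\<lambda>j. if j \<in> set J then x else \<alpha> j)))
    \<le> \<Delta> x + c * anchor_dist x \<alpha>"
proof -
  define q where "q = (1 - 1 / real n) ^ b"
  define x' where "x' = saga_next b \<alpha> x"
  define \<alpha>J where "\<alpha>J = (\<lambda>J j. if j \<in> set J then x else \<alpha> j)"
  define Z where "Z = anchor_dist x \<alpha>"
  define dev where "dev = (\<lambda>I. (norm (gavg n gs x - vr_grad b I x \<alpha>))\<^sup>2)"
  have q0: "q \<ge> 0" unfolding q_def using n_pos by simp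
  have Z0: "Z \<ge> 0" unfolding Z_def by (rule anchor_dist_nonneg)
  have inner: "measure_pmf.expectation (draw_idx n b)
      (\<lambda>J. \<eta> * \<mu> * \<Delta> x + \<Delta> (x' I) + c * anchor_dist (x' I) (\<alpha>J J))
    \<le> \<Delta> x + \<eta> / 2 * dev I + c * q * (1 + \<theta>) * Z" for I
  proof -
    have "c * measure_pmf.expectation (draw_idx n b) (\<lambda>J. anchor_dist (x' I) (\<alpha>J J))
        \<le> c * ((1 + q / \<theta>) * (norm (x' I - x))\<^sup>2 + q * (1 + \<theta>) * Z)"
      using anchor_dist_refresh_expectation[OF th, where y="x' I" and x=x and \<alpha>=\<alpha>] c0
      unfolding \<alpha>J_def q_def Z_def by (rule mult_left_mono)
    also have "\<dots> = c * (1 + q / \<theta>) * (norm (x' I - x))\<^sup>2 + c * q * (1 + \<theta>) * Z"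
      by (simp add: algebra_simps)
    also have "\<dots> \<le> 2 * L * (norm (x' I - x))\<^sup>2 + c * q * (1 + \<theta>) * Z"
      using C1 unfolding q_def by (intro add_right_mono mult_right_mono) auto
    finally show ?thesis
      using prox_step_descent[OF xD, of "x' I" "vr_grad b I x \<alpha>"]
      unfolding x'_def saga_next_def dev_def by (simp add: integrable_draw_idx[OF n_pos])
  qed
  have "\<eta> / 2 * measure_pmf.expectation (draw_idx n b) dev \<le> \<eta> / 2 * (L\<^sup>2 / real b * Z)"
    using vr_grad_variance_le[OF b] eta_pos unfolding dev_def Z_def by (intro mult_left_mono) auto
  also have "\<dots> = L / (10 * real b) * Z"
    unfolding \<eta>_def using L_pos by (simp add: power2_eq_square field_simps)
  finally have var: "\<eta> / 2 * measure_pmf.expectation (draw_idx n b) dev \<le> L / (10 * real b) * Z" .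
  have "L / (10 * real b) * Z + c * q * (1 + \<theta>) * Z \<le> c * Z"
  proof -
    have "(L / (10 * real b) + c * (q * (1 + \<theta>))) * Z \<le> c * Z"
      using C2 Z0 unfolding q_def by (intro mult_right_mono) auto
    then show ?thesis by (simp add: algebra_simps)
  qed
  moreover have "measure_pmf.expectation (draw_idx n b) (\<lambda>I. measure_pmf.expectation (draw_idx n b)
      (\<lambda>J. \<eta> * \<mu> * \<Delta> x + \<Delta> (x' I) + c * anchor_dist (x' I) (\<alpha>J J)))
    \<le> \<Delta> x + \<eta> / 2 * measure_pmf.expectation (draw_idx n b) dev + c * q * (1 + \<theta>) * Z"
  proof -
    have "measure_pmf.expectation (draw_idx n b) (\<lambda>I. measure_pmf.expectation (draw_idx n b)
        (\<lambda>J. \<eta> * \<mu> * \<Delta> x + \<Delta> (x' I) + c * anchor_dist (x' I) (\<alpha>J J)))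
      \<le> measure_pmf.expectation (draw_idx n b) (\<lambda>I. \<Delta> x + \<eta> / 2 * dev I + c * q * (1 + \<theta>) * Z)"
      by (intro integral_mono inner integrable_draw_idx[OF n_pos])
    then show ?thesis by (simp add: integrable_draw_idx[OF n_pos])
  qed
  ultimately show ?thesis
    using var unfolding x'_def \<alpha>J_def Z_def by linarith
qed

lemma saga_iter_support:
  "x \<in> D \<Longrightarrow> l \<in> set_pmf (saga_iter n gs h b \<eta> k x \<alpha>) \<Longrightarrow> set l \<subseteq> D \<and> length l = k"
proof (induction k arbitrary: x \<alpha> l)
  case 0
  then show ?case by simp
next
  case (Suc k)
  from Suc.prems(2) obtain v \<alpha>' r where
    r: "r \<in> set_pmf (saga_iter n gs h b \<eta> k (prox \<eta> h (x - \<eta> *\<^sub>R v)) \<alpha>')" and l: "l = x # r"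
    by (auto simp: Let_def)
  from Suc.IH[OF prox_step_mem[OF Suc.prems(1)] r] show ?case using l Suc.prems(1) by auto
qed

lemma saga_iter_bound:
  assumes b: "b \<ge> 1" and th: "\<theta> > 0" and c0: "c \<ge> 0"
    and C1: "c * (1 + (1 - 1 / real n) ^ b / \<theta>) \<le> 2 * L"
    and C2: "L / (10 * real b) + c * ((1 - 1 / real n) ^ b * (1 + \<theta>)) \<le> c"
  shows "x \<in> D \<Longrightarrow> (\<integral>\<^sup>+l. ennreal (\<eta> * \<mu>) * sum_list (map (\<lambda>z. ennreal (\<Delta> z)) l)
       \<partial>measure_pmf (saga_iter n gs h b \<eta> k x \<alpha>)) \<le> ennreal (\<Delta> x + c * anchor_dist x \<alpha>)"
proof (induction k arbitrary: x \<alpha>)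
  case 0
  then show ?case using Delta_nonneg[OF 0] c0 anchor_dist_nonneg[of x \<alpha>] by simp
next
  case (Suc k)
  note xD = Suc.prems
  define S where "S = (\<lambda>l. ennreal (\<eta> * \<mu>) * sum_list (map (\<lambda>z. ennreal (\<Delta> z)) l))"
  define x' where "x' = saga_next b \<alpha> x"
  define \<alpha>J where "\<alpha>J = (\<lambda>J j. if j \<in> set J then x else \<alpha> j)"
  define f where "f = (\<lambda>I J. \<eta> * \<mu> * \<Delta> x + \<Delta> (x' I) + c * anchor_dist (x' I) (\<alpha>J J))"
  define E :: "(nat list \<Rightarrow> real) \<Rightarrow> real" where "E = measure_pmf.expectation (draw_idx n b)"
  have x'D: "x' I \<in> D" for I unfolding x'_def saga_next_def by (rule prox_step_mem[OF xD])
  have f0: "0 \<le> f I J" for I J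
    unfolding f_def using eta_pos mu_pos Delta_nonneg[OF xD] Delta_nonneg[OF x'D] c0 anchor_dist_nonneg
    by (intro add_nonneg_nonneg mult_nonneg_nonneg) auto
  have S_Cons: "S (x # r) = ennreal (\<eta> * \<mu> * \<Delta> x) + S r" for r
    unfolding S_def by (simp add: distrib_left ennreal_mult_Delta[OF xD])
  have "(\<integral>\<^sup>+l. S l \<partial>measure_pmf (saga_iter n gs h b \<eta> (Suc k) x \<alpha>))
    = (\<integral>\<^sup>+I. \<integral>\<^sup>+J. ennreal (\<eta> * \<mu> * \<Delta> x) + (\<integral>\<^sup>+r. S r \<partial>measure_pmf (saga_iter n gs h b \<eta> k (x' I) (\<alpha>J J)))
        \<partial>measure_pmf (draw_idx n b) \<partial>measure_pmf (draw_idx n b))"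
    unfolding x'_def \<alpha>J_def saga_next_def vr_grad_def by (simp add: Let_def S_Cons nn_integral_pmf_const_add)
  also have "\<dots> \<le> (\<integral>\<^sup>+I. \<integral>\<^sup>+J. ennreal (f I J) \<partial>measure_pmf (draw_idx n b) \<partial>measure_pmf (draw_idx n b))"
  proof (intro nn_integral_mono)
    fix I J
    have "ennreal (f I J) = ennreal (\<eta> * \<mu> * \<Delta> x) + ennreal (\<Delta> (x' I) + c * anchor_dist (x' I) (\<alpha>J J))"
      unfolding f_def add.assoc
      using eta_pos mu_pos Delta_nonneg[OF xD] Delta_nonneg[OF x'D] c0 anchor_dist_nonneg
      by (intro ennreal_plus) (auto intro!: add_nonneg_nonneg mult_nonneg_nonneg)
    then show "ennreal (\<eta> * \<mu> * \<Delta> x) + (\<integral>\<^sup>+r. S r \<partial>measure_pmf (saga_iter n gs h b \<eta> k (x' I) (\<alpha>J J)))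
        \<le> ennreal (f I J)"
      using Suc.IH[OF x'D] unfolding S_def by (simp add: add_left_mono)
  qed
  also have "\<dots> = (\<integral>\<^sup>+I. ennreal (E (f I)) \<partial>measure_pmf (draw_idx n b))"
    unfolding E_def using f0
    by (intro nn_integral_cong nn_integral_pmf_eq_expectation finite_set_pmf_draw_idx[OF n_pos])
  also have "\<dots> = ennreal (E (\<lambda>I. E (f I)))"
    unfolding E_def using f0
    by (intro nn_integral_pmf_eq_expectation finite_set_pmf_draw_idx[OF n_pos] integral_nonneg_AE) auto
  also have "\<dots> \<le> ennreal (\<Delta> x + c * anchor_dist x \<alpha>)"
    using saga_step_expectation[OF b th c0 C1 C2 xD, of \<alpha>]
    unfolding E_def f_def x'_def \<alpha>J_def by (rule ennreal_leI)
  finally show ?case unfolding S_def .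
qed

lemma ProxSAGA_halves_gap:
  assumes b: "b \<ge> 1" and th: "\<theta> > 0" and c0: "c \<ge> 0"
    and C1: "c * (1 + (1 - 1 / real n) ^ b / \<theta>) \<le> 2 * L"
    and C2: "L / (10 * real b) + c * ((1 - 1 / real n) ^ b * (1 + \<theta>)) \<le> c"
    and T: "T \<ge> 1" "2 \<le> real T * (\<eta> * \<mu>)" and x0D: "x0 \<in> D"
  shows "set_pmf (ProxSAGA n gs h x0 T b \<eta>) \<subseteq> D"
    and "(\<integral>\<^sup>+x. ennreal (\<Delta> x) \<partial>measure_pmf (ProxSAGA n gs h x0 T b \<eta>)) \<le> ennreal (\<Delta> x0) / 2"
proof -
  define E where "E = saga_iter n gs h b \<eta> T x0 (\<lambda>_. x0)"
  have supp: "set l \<subseteq> D \<and> length l = T" if "l \<in> set_pmf E" for l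
    using saga_iter_support[OF x0D] that unfolding E_def by blast
  have PS: "ProxSAGA n gs h x0 T b \<eta> = E \<bind> unif_list" unfolding ProxSAGA_def E_def ..
  show "set_pmf (ProxSAGA n gs h x0 T b \<eta>) \<subseteq> D"
  proof
    fix x assume "x \<in> set_pmf (ProxSAGA n gs h x0 T b \<eta>)"
    then obtain l where l: "l \<in> set_pmf E" "x \<in> set_pmf (unif_list l)" unfolding PS by auto
    moreover have "l \<noteq> []" using supp[OF l(1)] T(1) by auto
    ultimately show "x \<in> D" using supp by (auto simp: set_pmf_unif_list)
  qed
  show "(\<integral>\<^sup>+x. ennreal (\<Delta> x) \<partial>measure_pmf (ProxSAGA n gs h x0 T b \<eta>)) \<le> ennreal (\<Delta> x0) / 2"
    unfolding PS
  proof (rule nn_integral_bind_unif_list_le)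
    show "(\<integral>\<^sup>+l. ennreal (\<eta> * \<mu>) * sum_list (map (\<lambda>x. ennreal (\<Delta> x)) l) \<partial>measure_pmf E) \<le> ennreal (\<Delta> x0)"
      using saga_iter_bound[OF b th c0 C1 C2 x0D, of T "\<lambda>_. x0"]
      unfolding E_def anchor_dist_const by simp
  qed (use supp T eta_pos mu_pos in auto)
qed

lemma gap_restart_bound:
  fixes Q :: "nat \<Rightarrow> 'a pmf" and P :: "'a \<Rightarrow> 'a pmf"
  assumes Q0: "Q 0 = return_pmf x0" and QSuc: "\<And>k. Q (Suc k) = Q k \<bind> P"
    and P_dom: "\<And>y. y \<in> D \<Longrightarrow> set_pmf (P y) \<subseteq> D"
    and P_half: "\<And>y. y \<in> D \<Longrightarrow> (\<integral>\<^sup>+x. ennreal (\<Delta> x) \<partial>measure_pmf (P y)) \<le> ennreal (\<Delta> y) / 2"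
  shows "(\<integral>\<^sup>+x. e2ennreal (Fobj n fs h x - Fobj n fs h xstar) \<partial>measure_pmf (Q K))
    \<le> e2ennreal (Fobj n fs h x0 - Fobj n fs h xstar) / 2 ^ K"
proof (cases "x0 \<in> D")
  case False
  then have "Fobj n fs h x0 - Fobj n fs h xstar = \<infinity>"
    unfolding Fobj_def D_def edom_def using Fobj_eq_ereal_Fr[OF xstar_in_D] by simp
  then show ?thesis by (simp add: ennreal_top_divide power_eq_top_ennreal)
next
  case True
  have gap: "e2ennreal (Fobj n fs h x - Fobj n fs h xstar) = ennreal (\<Delta> x)" if "x \<in> D" for x
    using Fobj_eq_ereal_Fr[OF that] Fobj_eq_ereal_Fr[OF xstar_in_D] unfolding \<Delta>_def by (simp add: e2ennreal_ereal)
  have "(\<integral>\<^sup>+x. e2ennreal (Fobj n fs h x - Fobj n fs h xstar) \<partial>measure_pmf (P y))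
      \<le> e2ennreal (Fobj n fs h y - Fobj n fs h xstar) / 2" if "y \<in> D" for y
  proof -
    have "(\<integral>\<^sup>+x. e2ennreal (Fobj n fs h x - Fobj n fs h xstar) \<partial>measure_pmf (P y))
        = (\<integral>\<^sup>+x. ennreal (\<Delta> x) \<partial>measure_pmf (P y))"
      using P_dom[OF that] gap by (intro nn_integral_cong_AE) (auto simp: AE_measure_pmf_iff)
    then show ?thesis using P_half[OF that] gap[OF that] by simp
  qed
  then show ?thesis
    using restart_halving[OF Q0 QSuc True P_dom] by blast
qed

end

section \<open>Choice of the parameters\<close>

lemma one_minus_inverse_power_le:
  fixes n b :: nat
  assumes n: "n \<ge> 1" and bn: "b \<le> n"
  shows "(1 - 1 / real n) ^ b \<le> 1 - real b / (2 * real n)"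
proof -
  define x where "x = 1 / real n"
  have x0: "0 < x" "x \<le> 1" unfolding x_def using n by auto
  have bx: "real b * x \<le> 1" unfolding x_def using bn n by (simp add: field_simps)
  have "(1 - x) ^ b * (1 + x) ^ b = (1 - x\<^sup>2) ^ b" by (simp add: power_mult_distrib[symmetric] power2_eq_square algebra_simps)
  also have "\<dots> \<le> 1" using x0 by (intro power_le_one) (auto simp: power2_eq_square mult_le_one)
  finally have p1: "(1 - x) ^ b * (1 + x) ^ b \<le> 1" .
  have bern: "1 + real b * x \<le> (1 + x) ^ b" using Bernoulli_inequality[of x b] x0 by simp
  have pos: "0 < 1 + real b * x" using x0 by (simp add: add_pos_nonneg)
  have "(1 - x) ^ b * (1 + real b * x) \<le> (1 - x) ^ b * (1 + x) ^ b"
    using bern x0 by (intro mult_left_mono) auto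
  then have "(1 - x) ^ b * (1 + real b * x) \<le> 1" using p1 by simp
  then have a: "(1 - x) ^ b \<le> 1 / (1 + real b * x)" using pos by (simp add: field_simps)
  have "1 / (1 + real b * x) \<le> 1 - real b * x / 2"
  proof -
    define y where "y = real b * x"
    have y01: "0 \<le> y" "y \<le> 1" unfolding y_def using bx x0 by auto
    have "0 \<le> y * (1 - y)" using y01 by simp
    moreover have "(1 - y / 2) * (1 + y) = 1 + y * (1 - y) / 2" by (simp add: field_simps)
    ultimately have "1 \<le> (1 - y / 2) * (1 + y)" by simp
    then have "1 \<le> (1 - real b * x / 2) * (1 + real b * x)" unfolding y_def .
    then show ?thesis using pos by (simp add: field_simps)
  qed
  with a show ?thesis unfolding x_def by simp
qed

lemma saga_Lyapunov_constants:
  fixes n bsz :: nat and L r :: real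
  assumes n: "n \<ge> 1" and L: "L > 0" and r1: "r \<ge> 1"
    and b_eq: "real bsz = r * r" and n_eq: "real n = r * r * r"
  shows "\<exists>\<theta> c. \<theta> > 0 \<and> c \<ge> 0 \<and> c * (1 + (1 - 1 / real n) ^ bsz / \<theta>) \<le> 2 * L \<and>
    L / (10 * real bsz) + c * ((1 - 1 / real n) ^ bsz * (1 + \<theta>)) \<le> c"
proof -
  define q where "q = (1 - 1 / real n) ^ bsz"
  have q0: "0 \<le> q" "q \<le> 1" unfolding q_def using n by (auto intro: power_le_one)
  have bn: "bsz \<le> n"
  proof -
    have "r * r * 1 \<le> r * r * r" using r1 by (intro mult_left_mono) auto
    then show ?thesis using b_eq n_eq by simp
  qed
  have qb: "q \<le> 1 - 1 / (2 * r)"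
  proof -
    have "q \<le> 1 - real bsz / (2 * real n)" unfolding q_def by (rule one_minus_inverse_power_le[OF n bn])
    also have "real bsz / (2 * real n) = 1 / (2 * r)" unfolding b_eq n_eq using r1 by (simp add: field_simps)
    finally show ?thesis .
  qed
  define \<theta> where "\<theta> = 1 / (4 * r)"
  define c where "c = 2 * L / (5 * r)"
  have th: "\<theta> > 0" unfolding \<theta>_def using r1 by simp
  have c0: "c \<ge> 0" unfolding c_def using r1 L by simp
  have C1: "c * (1 + q / \<theta>) \<le> 2 * L"
  proof -
    have "q / \<theta> \<le> 4 * r" unfolding \<theta>_def using q0 r1 by (simp add: field_simps)
    then have "c * (1 + q / \<theta>) \<le> c * (1 + 4 * r)" using c0 by (intro mult_left_mono) auto
    also have "\<dots> = 2 * L / (5 * r) + 8 * L / 5" unfolding c_def using r1 by (simp add: field_simps)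
    also have "\<dots> \<le> 2 * L / 5 + 8 * L / 5"
    proof -
      have "2 * L / (5 * r) \<le> 2 * L / 5" using r1 L by (simp add: field_simps)
      then show ?thesis by simp
    qed
    finally show ?thesis by simp
  qed
  have C2: "L / (10 * real bsz) + c * (q * (1 + \<theta>)) \<le> c"
  proof -
    have "q * (1 + \<theta>) \<le> (1 - 1 / (2 * r)) * (1 + \<theta>)" using qb th by (intro mult_right_mono) auto
    also have "\<dots> = 1 - 1 / (4 * r) - 1 / (8 * r * r)" unfolding \<theta>_def using r1 by (simp add: field_simps)
    finally have "c * (q * (1 + \<theta>)) \<le> c * (1 - 1 / (4 * r) - 1 / (8 * r * r))" using c0 by (intro mult_left_mono) auto
    also have "\<dots> = c - L / (10 * (r * r)) - L / (20 * (r * r * r))" unfolding c_def using r1 by (simp add: field_simps)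
    finally have "c * (q * (1 + \<theta>)) \<le> c - L / (10 * (r * r)) - L / (20 * (r * r * r))" .
    moreover have "L / (20 * (r * r * r)) \<ge> 0" using L r1 by simp
    ultimately show ?thesis unfolding b_eq by simp
  qed
  show "\<exists>\<theta> c. \<theta> > 0 \<and> c \<ge> 0 \<and> c * (1 + (1 - 1 / real n) ^ bsz / \<theta>) \<le> 2 * L \<and>
        L / (10 * real bsz) + c * ((1 - 1 / real n) ^ bsz * (1 + \<theta>)) \<le> c"
    using th c0 C1 C2 unfolding q_def by blast
qed

lemma powr_one_third_facts:
  fixes n bsz :: nat
  assumes n: "n \<ge> 1" and bsz: "real bsz = real n powr (2/3)"
  shows "real n powr (1/3) \<ge> 1" "real bsz = real n powr (1/3) * real n powr (1/3)"
    "real n = real n powr (1/3) * real n powr (1/3) * real n powr (1/3)"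
proof -
  show "real n powr (1/3) \<ge> 1" using n by (intro ge_one_powr_ge_zero) auto
  show "real bsz = real n powr (1/3) * real n powr (1/3)" unfolding bsz by (simp add: powr_add[symmetric])
  have "real n = real n powr (1/3 + 1/3 + 1/3)" using n by simp
  then show "real n = real n powr (1/3) * real n powr (1/3) * real n powr (1/3)" by (simp only: powr_add)
qed

lemma epoch_length_facts:
  fixes r :: real
  assumes "r \<ge> 1"
  shows "nat \<lfloor>r\<rfloor> \<ge> 1" "real (nat \<lfloor>r\<rfloor>) * real (nat \<lfloor>r\<rfloor>) \<le> r * r"
proof -
  show "nat \<lfloor>r\<rfloor> \<ge> 1" using assms by linarith
  have "real (nat \<lfloor>r\<rfloor>) \<le> r" "0 \<le> real (nat \<lfloor>r\<rfloor>)" using assms by linarith+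
  then show "real (nat \<lfloor>r\<rfloor>) * real (nat \<lfloor>r\<rfloor>) \<le> r * r" by (intro mult_mono) auto
qed

lemma restart_length_facts:
  fixes L \<mu> :: real
  assumes L: "L > 0" and mu: "\<mu> > 0" and k: "L / \<mu> > 1"
  shows "nat \<lceil>30 * (L / \<mu>)\<rceil> \<ge> 1" "2 \<le> real (nat \<lceil>30 * (L / \<mu>)\<rceil>) * (1 / (5 * L) * \<mu>)"
proof -
  have T: "real (nat \<lceil>30 * (L / \<mu>)\<rceil>) \<ge> 30 * (L / \<mu>)" by linarith
  then show "nat \<lceil>30 * (L / \<mu>)\<rceil> \<ge> 1" using k by linarith
  have "real (nat \<lceil>30 * (L / \<mu>)\<rceil>) * (1 / (5 * L) * \<mu>) \<ge> 30 * (L / \<mu>) * (1 / (5 * L) * \<mu>)"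
    using T L mu by (intro mult_right_mono) auto
  moreover have "30 * (L / \<mu>) * (1 / (5 * L) * \<mu>) = 6" using L mu by (simp add: field_simps)
  ultimately show "2 \<le> real (nat \<lceil>30 * (L / \<mu>)\<rceil>) * (1 / (5 * L) * \<mu>)" by simp
qed

theorem theorem7:
  fixes n :: nat and L \<mu> :: real
    and fs :: "nat \<Rightarrow> 'a::euclidean_space \<Rightarrow> real"
    and gs :: "nat \<Rightarrow> 'a \<Rightarrow> 'a"
    and h :: "'a \<Rightarrow> ereal"
    and xstar x0 :: 'a
    and bsz :: nat
  assumes n_pos: "n \<ge> 1"
    and grad: "\<forall>i\<in>{1..n}. \<forall>x. (fs i has_derivative (\<lambda>v. gs i x \<bullet> v)) (at x)"
    and L_pos: "L > 0"
    and smooth: "\<forall>i\<in>{1..n}. \<forall>x y. norm (gs i x - gs i y) \<le> L * norm (x - y)"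
    and h_proper: "proper_fun h"
    and h_lsc: "lsc_fun h"
    and h_convex: "convex_efun h"
    and h_closed_dom: "closed (edom h)"
    and xstar_min: "\<forall>x. Fobj n fs h xstar \<le> Fobj n fs h x"
    and PL: "is_PL \<mu> (Fobj n fs h) (gavg n gs) h xstar"
    and kappa: "L / \<mu> > real n powr (1/3)"
    and bsz_def: "real bsz = real n powr (2/3)"
  shows "\<forall>K\<ge>1.
     let \<eta> = 1 / (5 * L); m = nat \<lfloor>real n powr (1/3)\<rfloor>; T = nat \<lceil>30 * (L / \<mu>)\<rceil> in
       (\<integral>\<^sup>+ x. e2ennreal (Fobj n fs h x - Fobj n fs h xstar) \<partial>measure_pmf (PL_SVRG n gs h x0 K T m bsz \<eta>))
         \<le> e2ennreal (Fobj n fs h x0 - Fobj n fs h xstar) / 2 ^ K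
     \<and> (\<integral>\<^sup>+ x. e2ennreal (Fobj n fs h x - Fobj n fs h xstar) \<partial>measure_pmf (PL_SAGA n gs h x0 K T bsz \<eta>))
         \<le> e2ennreal (Fobj n fs h x0 - Fobj n fs h xstar) / 2 ^ K"
proof (intro allI impI)
  fix K :: nat
  define r where "r = real n powr (1/3)"
  define m where "m = nat \<lfloor>r\<rfloor>"
  define T where "T = nat \<lceil>30 * (L / \<mu>)\<rceil>"
  have r: "r \<ge> 1" "real bsz = r * r" "real n = r * r * r"
    using powr_one_third_facts[OF n_pos bsz_def] unfolding r_def by auto
  have mu: "\<mu> > 0" using PL unfolding is_PL_def by simp
  have kappa1: "L / \<mu> > 1" using kappa r(1) unfolding r_def by linarith
  then have "\<mu> \<le> L" using mu by (simp add: field_simps)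
  then interpret PL_finite_sum n L \<mu> fs gs h xstar
    using n_pos grad L_pos smooth h_proper h_lsc h_convex xstar_min PL by unfold_locales
  have b: "bsz \<ge> 1" using r by (smt (verit) mult_le_cancel_left1 of_nat_le_iff of_nat_1)
  have m: "m \<ge> 1" "real m * real m \<le> real bsz" using epoch_length_facts[OF r(1)] r(2) unfolding m_def by auto
  have T: "T \<ge> 1" "2 \<le> real T * (\<eta> * \<mu>)"
    using restart_length_facts[OF L_pos mu kappa1] unfolding T_def \<eta>_def by auto
  obtain \<theta> c where saga_consts: "\<theta> > 0" "c \<ge> 0"
    "c * (1 + (1 - 1 / real n) ^ bsz / \<theta>) \<le> 2 * L"
    "L / (10 * real bsz) + c * ((1 - 1 / real n) ^ bsz * (1 + \<theta>)) \<le> c"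
    using saga_Lyapunov_constants[OF n_pos L_pos r] by blast
  have "(\<integral>\<^sup>+ x. e2ennreal (Fobj n fs h x - Fobj n fs h xstar) \<partial>measure_pmf (PL_SVRG n gs h x0 K T m bsz \<eta>))
      \<le> e2ennreal (Fobj n fs h x0 - Fobj n fs h xstar) / 2 ^ K"
    by (rule gap_restart_bound[where P="\<lambda>y. ProxSVRG n gs h y T m bsz \<eta>"])
       (use ProxSVRG_halves_gap[OF b m T] in simp_all)
  moreover have "(\<integral>\<^sup>+ x. e2ennreal (Fobj n fs h x - Fobj n fs h xstar) \<partial>measure_pmf (PL_SAGA n gs h x0 K T bsz \<eta>))
      \<le> e2ennreal (Fobj n fs h x0 - Fobj n fs h xstar) / 2 ^ K"
    by (rule gap_restart_bound[where P="\<lambda>y. ProxSAGA n gs h y T bsz \<eta>"])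
       (use ProxSAGA_halves_gap[OF b saga_consts T] in simp_all)
  ultimately show "let \<eta> = 1 / (5 * L); m = nat \<lfloor>real n powr (1/3)\<rfloor>; T = nat \<lceil>30 * (L / \<mu>)\<rceil> in
       (\<integral>\<^sup>+ x. e2ennreal (Fobj n fs h x - Fobj n fs h xstar) \<partial>measure_pmf (PL_SVRG n gs h x0 K T m bsz \<eta>))
         \<le> e2ennreal (Fobj n fs h x0 - Fobj n fs h xstar) / 2 ^ K
     \<and> (\<integral>\<^sup>+ x. e2ennreal (Fobj n fs h x - Fobj n fs h xstar) \<partial>measure_pmf (PL_SAGA n gs h x0 K T bsz \<eta>))
         \<le> e2ennreal (Fobj n fs h x0 - Fobj n fs h xstar) / 2 ^ K"
    unfolding Let_def \<eta>_def[symmetric] m_def r_def T_def by blast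
qed

end
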